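(* Let $\mathcal Z\subseteq\mathcal H$ be a subspace, let $A$ be a $\Delta$-AGSP for $\mathcal Z$ with $\Delta\le 1/2$, and set $\tilde H=I-A^\dagger A$. Let $\delta>0$ and let $\mathcal Y\subseteq\mathcal H$ be $\delta$-viable for $\mathcal Z$. Let $\tilde{\mathcal Z}\subseteq\mathcal Y$ be the support (range) of the spectral projection $\mathbf 1_{[0,\delta]}(\tilde H|_{\mathcal Y})$, regarded as a subspace of $\mathcal H$. Then $\tilde{\mathcal Z}$ and $\mathcal Z$ are $2\delta$-close.
   Context: For a subspace $\mathcal Y\subseteq\mathcal H$, $P_{\mathcal Y}$ is the orthogonal projection onto $\mathcal Y$, and for an operator $X$ on $\mathcal H$, $X|_{\mathcal Y}=\Gamma X\Gamma^\dagger$ is its two-sided restriction, where $\Gamma:\mathcal H\to\mathcal Y$ is the projection onto $\mathcal Y$ and $\Gamma^\dagger$ the inclusion. $\mathcal Y$ is $\delta$-viable for $\mathcal Z$ if $\|P_{\mathcal Y}|z\rangle\|^2\ge1-\delta$ for every unit $|z\rangle\in\mathcal Z$; two subspaces are $\delta$-close if each is $\delta$-viable for the other. A $\Delta$-AGSP for $\mathcal Z$ is an operator $A=I_{\mathcal Z}\oplus A_{\mathcal Z^\perp}$ on $\mathcal H$ with $A_{\mathcal Z^\perp}$ an operator on $\mathcal Z^\perp$ of norm at most $\sqrt\Delta$. *)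

theory Defs
  imports "Jordan_Normal_Form.Schur_Decomposition"
begin

text \<open>The ambient Hilbert space H is C^n, modelled as the vectors of
  carrier_vec n (type complex vec); operators are n x n complex matrices.\<close>

definition vnorm :: "complex vec \<Rightarrow> real" where
  "vnorm v = sqrt (Re (v \<bullet>c v))"

definition is_subspace :: "nat \<Rightarrow> complex vec set \<Rightarrow> bool" where
  "is_subspace n Y \<longleftrightarrow> Y \<subseteq> carrier_vec n \<and> 0\<^sub>v n \<in> Y
     \<and> (\<forall>u\<in>Y. \<forall>v\<in>Y. u + v \<in> Y) \<and> (\<forall>c. \<forall>u\<in>Y. c \<cdot>\<^sub>v u \<in> Y)"

definition orth_compl :: "nat \<Rightarrow> complex vec set \<Rightarrow> complex vec set" where
  "orth_compl n Y = {w \<in> carrier_vec n. \<forall>y\<in>Y. w \<bullet>c y = 0}"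

definition proj :: "complex vec set \<Rightarrow> complex vec \<Rightarrow> complex vec" where
  "proj Y v = (THE p. p \<in> Y \<and> (\<forall>y\<in>Y. (v - p) \<bullet>c y = 0))"

definition vspan :: "nat \<Rightarrow> complex vec set \<Rightarrow> complex vec set" where
  "vspan n S = \<Inter>{W. is_subspace n W \<and> S \<subseteq> W}"

definition viable :: "real \<Rightarrow> complex vec set \<Rightarrow> complex vec set \<Rightarrow> bool" where
  "viable \<delta> Y Z \<longleftrightarrow> (\<forall>z\<in>Z. vnorm z = 1 \<longrightarrow> (vnorm (proj Y z))\<^sup>2 \<ge> 1 - \<delta>)"

definition close :: "real \<Rightarrow> complex vec set \<Rightarrow> complex vec set \<Rightarrow> bool" where
  "close \<delta> Y Z \<longleftrightarrow> viable \<delta> Y Z \<and> viable \<delta> Z Y"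

definition AGSP :: "nat \<Rightarrow> real \<Rightarrow> complex vec set \<Rightarrow> complex mat \<Rightarrow> bool" where
  "AGSP n \<Delta> Z A \<longleftrightarrow> A \<in> carrier_mat n n
     \<and> (\<forall>z\<in>Z. A *\<^sub>v z = z)
     \<and> (\<forall>w\<in>orth_compl n Z. A *\<^sub>v w \<in> orth_compl n Z
                               \<and> vnorm (A *\<^sub>v w) \<le> sqrt \<Delta> * vnorm w)"

text \<open>Support of the spectral projection 1_[a,b](X|_Y), where the two-sided
  restriction X|_Y acts on Y as y \<mapsto> P_Y (X y): the span of the
  eigenvectors of X|_Y with (real) eigenvalue in [a,b].\<close>
definition spectral_subspace ::
  "nat \<Rightarrow> complex vec set \<Rightarrow> complex mat \<Rightarrow> real \<Rightarrow> real \<Rightarrow> complex vec set" where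
  "spectral_subspace n Y X a b = vspan n
     {y \<in> Y. \<exists>e::real. a \<le> e \<and> e \<le> b \<and> proj Y (X *\<^sub>v y) = complex_of_real e \<cdot>\<^sub>v y}"

end

theory Submission
  imports Defs "HOL-Computational_Algebra.Fundamental_Theorem_Algebra"
begin

text \<open>The AGSP fixes \<open>Z\<close> and contracts \<open>Z\<^sup>\<perp>\<close> by \<open>\<surd>\<Delta> \<le> 1/\<surd>2\<close>, so the energy \<open>\<langle>v, H v\<rangle>\<close> of
  \<open>H = I - A\<^sup>\<dagger>A\<close> equals \<open>\<parallel>q\<parallel>\<^sup>2 - \<parallel>A q\<parallel>\<^sup>2\<close> for the component \<open>q\<close> of \<open>v\<close> in \<open>Z\<^sup>\<perp>\<close>, which lies between
  \<open>\<parallel>q\<parallel>\<^sup>2/2\<close> and \<open>\<parallel>q\<parallel>\<^sup>2\<close>. Vectors of the spectral subspace \<open>Z\<^sup>~\<close> have energy at most \<open>\<delta>\<close>, hence at most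
  a \<open>2\<delta>\<close> fraction of their weight outside \<open>Z\<close>. Conversely, for \<open>z \<in> Z\<close> the vector \<open>P\<^sub>Y z\<close> has energy at
  most \<open>\<delta>\<close>, because \<open>H z = 0\<close> and \<open>Y\<close> is \<open>\<delta>\<close>-viable; since \<open>H|\<^sub>Y\<close> exceeds \<open>\<delta>\<close> on the orthogonal
  complement of \<open>Z\<^sup>~\<close> in \<open>Y\<close>, no nonzero \<open>z \<in> Z\<close> is orthogonal to \<open>Z\<^sup>~\<close>. So \<open>P\<^sub>Z\<close> maps \<open>Z\<^sup>~\<close> onto \<open>Z\<close>,
  and Cauchy-Schwarz turns the first bound into the \<open>2\<delta>\<close>-viability of \<open>Z\<^sup>~\<close> for \<open>Z\<close>.\<close>

section \<open>The inner product on complex vectors\<close>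

lemma cscalar_prod_eq_sum:
  assumes "v \<in> carrier_vec n" "w \<in> carrier_vec n"
  shows "v \<bullet>c w = (\<Sum>i<n. v$i * cnj (w$i))"
  using assms by (auto simp: scalar_prod_def lessThan_atLeast0 intro!: sum.cong)

lemma cscalar_prod_add_left:
  "(v::complex vec) \<in> carrier_vec n \<Longrightarrow> w \<in> carrier_vec n \<Longrightarrow> u \<in> carrier_vec n \<Longrightarrow>
    (v + w) \<bullet>c u = v \<bullet>c u + w \<bullet>c u"
  using add_scalar_prod_distrib[of v n w "conjugate u"] by simp

lemma cscalar_prod_add_right:
  "(v::complex vec) \<in> carrier_vec n \<Longrightarrow> w \<in> carrier_vec n \<Longrightarrow> u \<in> carrier_vec n \<Longrightarrow>
    u \<bullet>c (v + w) = u \<bullet>c v + u \<bullet>c w"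
  using scalar_prod_add_distrib[of u n "conjugate v" "conjugate w"] conjugate_add_vec[of v n w] by simp

lemma vec_diff_add_cancel: "(v::complex vec) \<in> carrier_vec n \<Longrightarrow> w \<in> carrier_vec n \<Longrightarrow> (v - w) + w = v"
  by (intro eq_vecI) auto

lemma cscalar_prod_diff_left:
  "(v::complex vec) \<in> carrier_vec n \<Longrightarrow> w \<in> carrier_vec n \<Longrightarrow> u \<in> carrier_vec n \<Longrightarrow>
    (v - w) \<bullet>c u = v \<bullet>c u - w \<bullet>c u"
  using cscalar_prod_add_left[of "v - w" n w u] vec_diff_add_cancel[of v n w] by simp

lemma cscalar_prod_diff_right:
  "(v::complex vec) \<in> carrier_vec n \<Longrightarrow> w \<in> carrier_vec n \<Longrightarrow> u \<in> carrier_vec n \<Longrightarrow>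
    u \<bullet>c (v - w) = u \<bullet>c v - u \<bullet>c w"
  using cscalar_prod_add_right[of "v - w" n w u] vec_diff_add_cancel[of v n w] by simp

lemma cscalar_prod_smult_left:
  "(v::complex vec) \<in> carrier_vec n \<Longrightarrow> w \<in> carrier_vec n \<Longrightarrow> (c \<cdot>\<^sub>v v) \<bullet>c w = c * (v \<bullet>c w)"
  by (simp add: cscalar_prod_eq_sum[of _ n] sum_distrib_left algebra_simps cong: sum.cong_simp)

lemma cscalar_prod_smult_right:
  "(v::complex vec) \<in> carrier_vec n \<Longrightarrow> w \<in> carrier_vec n \<Longrightarrow> v \<bullet>c (c \<cdot>\<^sub>v w) = cnj c * (v \<bullet>c w)"
  by (simp add: cscalar_prod_eq_sum[of _ n] sum_distrib_left algebra_simps cong: sum.cong_simp)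

lemma cnj_cscalar_prod:
  "(v::complex vec) \<in> carrier_vec n \<Longrightarrow> w \<in> carrier_vec n \<Longrightarrow> cnj (v \<bullet>c w) = w \<bullet>c v"
  by (simp add: cscalar_prod_eq_sum[of _ n] sum_conjugate[symmetric] ac_simps cong: sum.cong_simp)

lemma cscalar_prod_zero_left: "w \<in> carrier_vec n \<Longrightarrow> 0\<^sub>v n \<bullet>c w = 0"
  by (simp add: cscalar_prod_eq_sum[of _ n])

lemma cscalar_prod_zero_right: "w \<in> carrier_vec n \<Longrightarrow> w \<bullet>c 0\<^sub>v n = 0"
  by (simp add: cscalar_prod_eq_sum[of _ n])

lemma cscalar_prod_self_eq_0_iff: "(v::complex vec) \<in> carrier_vec n \<Longrightarrow> v \<bullet>c v = 0 \<longleftrightarrow> v = 0\<^sub>v n"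
  by simp

definition sqnorm :: "complex vec \<Rightarrow> real" where
  "sqnorm v = Re (v \<bullet>c v)"

lemma cscalar_prod_self: "(v::complex vec) \<in> carrier_vec n \<Longrightarrow> v \<bullet>c v = complex_of_real (sqnorm v)"
proof -
  assume v: "v \<in> carrier_vec n"
  have "Im (v \<bullet>c v) = 0"
    using cnj_cscalar_prod[OF v v] by (metis cnj.simps(2) complex.expand neg_equal_zero)
  thus ?thesis unfolding sqnorm_def by (simp add: complex_eq_iff)
qed

lemma sqnorm_nonneg: "v \<in> carrier_vec n \<Longrightarrow> sqnorm v \<ge> 0"
  using conjugate_square_ge_0_vec[of v] unfolding sqnorm_def by (simp add: less_eq_complex_def)

lemma sqnorm_eq_0_iff: "v \<in> carrier_vec n \<Longrightarrow> sqnorm v = 0 \<longleftrightarrow> v = 0\<^sub>v n"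
  using conjugate_square_eq_0_vec[of v n] cscalar_prod_self[of v n] by auto

lemma vnorm_power2: "v \<in> carrier_vec n \<Longrightarrow> (vnorm v)\<^sup>2 = sqnorm v"
  using sqnorm_nonneg[of v n] unfolding vnorm_def sqnorm_def[symmetric] by simp

lemma sqnorm_smult: "v \<in> carrier_vec n \<Longrightarrow> sqnorm (c \<cdot>\<^sub>v v) = (cmod c)\<^sup>2 * sqnorm v"
proof -
  assume v: "v \<in> carrier_vec n"
  have "(c \<cdot>\<^sub>v v) \<bullet>c (c \<cdot>\<^sub>v v) = c * cnj c * (v \<bullet>c v)"
    using v by (simp add: cscalar_prod_smult_left[of _ n] cscalar_prod_smult_right[of _ n])
  also have "\<dots> = complex_of_real ((cmod c)\<^sup>2 * sqnorm v)"
    by (simp add: complex_norm_square[symmetric] cscalar_prod_self[OF v])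
  finally show ?thesis unfolding sqnorm_def[of "c \<cdot>\<^sub>v v"] by simp
qed

lemma sqnorm_add_orthogonal:
  "v \<in> carrier_vec n \<Longrightarrow> w \<in> carrier_vec n \<Longrightarrow> v \<bullet>c w = 0 \<Longrightarrow> sqnorm (v + w) = sqnorm v + sqnorm w"
  using cnj_cscalar_prod[of v n w]
  by (simp add: sqnorm_def cscalar_prod_add_left[of _ n] cscalar_prod_add_right[of _ n])

lemma cauchy_schwarz_cscalar_prod:
  assumes v: "v \<in> carrier_vec n" and w: "w \<in> carrier_vec n"
  shows "(cmod (v \<bullet>c w))\<^sup>2 \<le> sqnorm v * sqnorm w"
proof (cases "w = 0\<^sub>v n")
  case True thus ?thesis using v by (simp add: cscalar_prod_zero_right sqnorm_def)
next
  case False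
  define b N where "b = v \<bullet>c w" and "N = sqnorm w"
  have N: "N > 0" using sqnorm_nonneg[OF w] sqnorm_eq_0_iff[OF w] False N_def by linarith
  define a where "a = b / complex_of_real N"
  have aw: "a \<cdot>\<^sub>v w \<in> carrier_vec n" using w by simp
  \<comment> \<open>expand \<open>0 \<le> \<parallel>v - a w\<parallel>\<^sup>2\<close> with the optimal coefficient \<open>a = \<langle>v,w\<rangle> / \<parallel>w\<parallel>\<^sup>2\<close>\<close>
  have "(v - a \<cdot>\<^sub>v w) \<bullet>c (v - a \<cdot>\<^sub>v w)
      = v \<bullet>c v - cnj a * b - a * cnj b + a * cnj a * complex_of_real N"
    using v w cnj_cscalar_prod[OF v w] cscalar_prod_self[OF w]
    by (simp add: cscalar_prod_diff_left[OF v aw] cscalar_prod_diff_right[OF v aw]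
        cscalar_prod_smult_left[OF w] cscalar_prod_smult_right[of _ n] b_def N_def algebra_simps)
  also have "\<dots> = complex_of_real (sqnorm v - (cmod b)\<^sup>2 / N)"
    using N by (simp add: a_def cscalar_prod_self[OF v] complex_norm_square[symmetric] field_simps)
  finally have "sqnorm (v - a \<cdot>\<^sub>v w) = sqnorm v - (cmod b)\<^sup>2 / N"
    unfolding sqnorm_def by simp
  moreover have "0 \<le> sqnorm (v - a \<cdot>\<^sub>v w)" using sqnorm_nonneg[of "v - a \<cdot>\<^sub>v w" n] v w by simp
  ultimately have "(cmod b)\<^sup>2 / N \<le> sqnorm v" by linarith
  thus ?thesis using N unfolding b_def N_def by (simp add: field_simps)
qed

section \<open>Subspaces and orthonormal families\<close>

lemma subspace_carrier: "is_subspace n S \<Longrightarrow> s \<in> S \<Longrightarrow> s \<in> carrier_vec n"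
  and subspace_zero: "is_subspace n S \<Longrightarrow> 0\<^sub>v n \<in> S"
  and subspace_add: "is_subspace n S \<Longrightarrow> s \<in> S \<Longrightarrow> t \<in> S \<Longrightarrow> s + t \<in> S"
  and subspace_smult: "is_subspace n S \<Longrightarrow> s \<in> S \<Longrightarrow> c \<cdot>\<^sub>v s \<in> S"
  unfolding is_subspace_def by auto

lemma vec_diff_eq_add_smult: "(s::complex vec) \<in> carrier_vec n \<Longrightarrow> t \<in> carrier_vec n \<Longrightarrow> s - t = s + (-1) \<cdot>\<^sub>v t"
  by (intro eq_vecI) auto

lemma subspace_diff: "is_subspace n S \<Longrightarrow> s \<in> S \<Longrightarrow> t \<in> S \<Longrightarrow> s - t \<in> S"
  using vec_diff_eq_add_smult[of s n t] subspace_carrier[of n S] subspace_add[of n S] subspace_smult[of n S]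
  by metis

lemma subspace_orthogonal_to_seq:
  assumes S: "is_subspace n S" and vs: "\<forall>j<m. vs j \<in> carrier_vec n"
  shows "is_subspace n {x \<in> S. \<forall>j<m. P j \<longrightarrow> x \<bullet>c vs j = 0}"
  unfolding is_subspace_def
proof (intro conjI ballI allI)
  show "{x \<in> S. \<forall>j<m. P j \<longrightarrow> x \<bullet>c vs j = 0} \<subseteq> carrier_vec n"
    using subspace_carrier[OF S] by blast
  show "0\<^sub>v n \<in> {x \<in> S. \<forall>j<m. P j \<longrightarrow> x \<bullet>c vs j = 0}"
    using subspace_zero[OF S] vs cscalar_prod_zero_left by auto
next
  fix u v assume "u \<in> {x \<in> S. \<forall>j<m. P j \<longrightarrow> x \<bullet>c vs j = 0}" "v \<in> {x \<in> S. \<forall>j<m. P j \<longrightarrow> x \<bullet>c vs j = 0}"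
  thus "u + v \<in> {x \<in> S. \<forall>j<m. P j \<longrightarrow> x \<bullet>c vs j = 0}"
    using subspace_add[OF S] subspace_carrier[OF S] vs cscalar_prod_add_left[of u n v] by auto
next
  fix c u assume "u \<in> {x \<in> S. \<forall>j<m. P j \<longrightarrow> x \<bullet>c vs j = 0}"
  thus "c \<cdot>\<^sub>v u \<in> {x \<in> S. \<forall>j<m. P j \<longrightarrow> x \<bullet>c vs j = 0}"
    using subspace_smult[OF S] subspace_carrier[OF S] vs cscalar_prod_smult_left[of u n] by auto
qed

lemma vspan_subspace: assumes E: "E \<subseteq> carrier_vec n" shows "is_subspace n (vspan n E)"
proof -
  have "is_subspace n (carrier_vec n)" unfolding is_subspace_def by auto
  hence "vspan n E \<subseteq> carrier_vec n" unfolding vspan_def using E by blast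
  moreover have "0\<^sub>v n \<in> vspan n E" "\<forall>u\<in>vspan n E. \<forall>v\<in>vspan n E. u + v \<in> vspan n E"
    "\<forall>c. \<forall>u\<in>vspan n E. c \<cdot>\<^sub>v u \<in> vspan n E"
    unfolding vspan_def by (auto simp: is_subspace_def)
  ultimately show ?thesis unfolding is_subspace_def by blast
qed

lemma vspan_least: "is_subspace n W \<Longrightarrow> E \<subseteq> W \<Longrightarrow> vspan n E \<subseteq> W"
  unfolding vspan_def by blast

lemma vspan_superset: "E \<subseteq> vspan n E"
  unfolding vspan_def by blast

definition lincomb_seq :: "nat \<Rightarrow> (nat \<Rightarrow> complex) \<Rightarrow> (nat \<Rightarrow> complex vec) \<Rightarrow> nat \<Rightarrow> complex vec" where
  "lincomb_seq n c vs m = vec n (\<lambda>i. \<Sum>j<m. c j * vs j $ i)"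

lemma lincomb_seq_carrier [simp]: "lincomb_seq n c vs m \<in> carrier_vec n"
  by (simp add: lincomb_seq_def)

lemma lincomb_seq_0: "lincomb_seq n c vs 0 = 0\<^sub>v n"
  by (intro eq_vecI) (auto simp: lincomb_seq_def)

lemma lincomb_seq_Suc:
  "vs m \<in> carrier_vec n \<Longrightarrow> lincomb_seq n c vs (Suc m) = lincomb_seq n c vs m + c m \<cdot>\<^sub>v vs m"
  by (intro eq_vecI) (auto simp: lincomb_seq_def)

lemma lincomb_seq_cong:
  "(\<And>j. j < m \<Longrightarrow> c j = d j) \<Longrightarrow> (\<And>j. j < m \<Longrightarrow> vs j = ws j) \<Longrightarrow>
    lincomb_seq n c vs m = lincomb_seq n d ws m"
  unfolding lincomb_seq_def by (intro eq_vecI) (auto intro!: sum.cong)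

lemma cscalar_prod_lincomb_seq_left:
  "\<forall>j<m. vs j \<in> carrier_vec n \<Longrightarrow> w \<in> carrier_vec n \<Longrightarrow>
    lincomb_seq n c vs m \<bullet>c w = (\<Sum>j<m. c j * (vs j \<bullet>c w))"
  by (induction m)
    (auto simp: lincomb_seq_0 lincomb_seq_Suc cscalar_prod_zero_left
      cscalar_prod_add_left[of _ n] cscalar_prod_smult_left[of _ n])

lemma cscalar_prod_lincomb_seq_right:
  "\<forall>j<m. vs j \<in> carrier_vec n \<Longrightarrow> w \<in> carrier_vec n \<Longrightarrow>
    w \<bullet>c lincomb_seq n c vs m = (\<Sum>j<m. cnj (c j) * (w \<bullet>c vs j))"
  by (induction m)
    (auto simp: lincomb_seq_0 lincomb_seq_Suc cscalar_prod_zero_right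
      cscalar_prod_add_right[of _ n] cscalar_prod_smult_right[of _ n])

lemma lincomb_seq_in_subspace: "is_subspace n S \<Longrightarrow> \<forall>j<m. vs j \<in> S \<Longrightarrow> lincomb_seq n c vs m \<in> S"
proof (induction m)
  case 0 thus ?case by (simp add: lincomb_seq_0 subspace_zero)
next
  case (Suc m)
  hence "lincomb_seq n c vs m \<in> S" "vs m \<in> S" by auto
  thus ?case
    using Suc.prems lincomb_seq_Suc[of vs m n c] subspace_carrier subspace_add subspace_smult by metis
qed

definition orthonormal_seq :: "nat \<Rightarrow> (nat \<Rightarrow> complex vec) \<Rightarrow> nat \<Rightarrow> bool" where
  "orthonormal_seq n vs m \<longleftrightarrow> (\<forall>j<m. vs j \<in> carrier_vec n) \<and>
     (\<forall>i<m. \<forall>j<m. vs i \<bullet>c vs j = (if i = j then 1 else 0))"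

lemma orthonormal_seq_carrier: "orthonormal_seq n vs m \<Longrightarrow> \<forall>j<m. vs j \<in> carrier_vec n"
  unfolding orthonormal_seq_def by auto

lemma cscalar_prod_lincomb_seq_basis:
  assumes "orthonormal_seq n vs m" "k < m"
  shows "lincomb_seq n c vs m \<bullet>c vs k = c k"
proof -
  have "lincomb_seq n c vs m \<bullet>c vs k = (\<Sum>j<m. c j * (vs j \<bullet>c vs k))"
    using assms by (intro cscalar_prod_lincomb_seq_left) (auto simp: orthonormal_seq_def)
  also have "\<dots> = (\<Sum>j<m. if j = k then c j else 0)"
    using assms by (intro sum.cong) (auto simp: orthonormal_seq_def)
  finally show ?thesis using assms(2) by simp
qed

lemma lincomb_seq_eq_0D:
  assumes "orthonormal_seq n vs m" "lincomb_seq n c vs m = 0\<^sub>v n" "k < m"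
  shows "c k = 0"
  using cscalar_prod_lincomb_seq_basis[OF assms(1,3), of c] assms orthonormal_seq_carrier
    cscalar_prod_zero_left by metis

lemma lincomb_seq_coordinates_eqI:
  assumes sp: "\<forall>s\<in>S. s = lincomb_seq n (\<lambda>j. s \<bullet>c vs j) vs m" and "x \<in> S" "y \<in> S"
    and "\<And>j. j < m \<Longrightarrow> x \<bullet>c vs j = y \<bullet>c vs j"
  shows "x = y"
  using assms lincomb_seq_cong[of m "\<lambda>j. x \<bullet>c vs j" "\<lambda>j. y \<bullet>c vs j" vs vs n] by metis

lemma cscalar_prod_lincomb_seq:
  assumes on: "orthonormal_seq n vs m"
  shows "lincomb_seq n c vs m \<bullet>c lincomb_seq n d vs m = (\<Sum>j<m. c j * cnj (d j))"
proof -
  have "lincomb_seq n c vs m \<bullet>c lincomb_seq n d vs m = (\<Sum>j<m. c j * (vs j \<bullet>c lincomb_seq n d vs m))"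
    using on by (intro cscalar_prod_lincomb_seq_left) (auto simp: orthonormal_seq_def)
  also have "\<dots> = (\<Sum>j<m. c j * cnj (d j))"
  proof (intro sum.cong refl)
    fix j assume j: "j \<in> {..<m}"
    hence "vs j \<bullet>c lincomb_seq n d vs m = cnj (lincomb_seq n d vs m \<bullet>c vs j)"
      using on cnj_cscalar_prod[of "lincomb_seq n d vs m" n "vs j"] by (simp add: orthonormal_seq_def)
    thus "c j * (vs j \<bullet>c lincomb_seq n d vs m) = c j * cnj (d j)"
      using cscalar_prod_lincomb_seq_basis[OF on, of j d] j by simp
  qed
  finally show ?thesis .
qed

text \<open>An orthonormal family in \<open>\<complex>\<^sup>n\<close> has at most \<open>n\<close> members: otherwise the \<open>m \<times> m\<close> matrix of its
  coordinates, padded with zero rows, would be unitary and singular.\<close>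

lemma orthonormal_seq_length_le:
  assumes on: "orthonormal_seq n vs m"
  shows "m \<le> n"
proof (rule ccontr)
  assume "\<not> m \<le> n" hence nm: "n < m" by simp
  define U where "U = mat m m (\<lambda>(i,j). if i < n then vs j $ i else (0::complex))"
  define Uh where "Uh = mat m m (\<lambda>(i,j). cnj (U $$ (j,i)))"
  have U: "U \<in> carrier_mat m m" and Uh: "Uh \<in> carrier_mat m m" unfolding U_def Uh_def by auto
  have "Uh * U = 1\<^sub>m m"
  proof (rule eq_matI)
    fix i j assume "i < dim_row (1\<^sub>m m)" "j < dim_col (1\<^sub>m m)"
    hence i: "i < m" and j: "j < m" by auto
    have "(Uh * U) $$ (i,j) = (\<Sum>l<m. Uh $$ (i,l) * U $$ (l,j))"
      using U Uh i j by (simp add: scalar_prod_def lessThan_atLeast0)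
    also have "\<dots> = (\<Sum>l<m. if l < n then vs j $ l * cnj (vs i $ l) else 0)"
      using i j by (intro sum.cong) (auto simp: U_def Uh_def)
    also have "\<dots> = (\<Sum>l\<in>{..<m} \<inter> {l. l < n}. vs j $ l * cnj (vs i $ l))"
      by (simp add: sum.inter_restrict)
    also have "{..<m} \<inter> {l. l < n} = {..<n}" using nm by auto
    also have "(\<Sum>l<n. vs j $ l * cnj (vs i $ l)) = vs j \<bullet>c vs i"
      using on i j by (intro cscalar_prod_eq_sum[symmetric]) (auto simp: orthonormal_seq_def)
    also have "\<dots> = 1\<^sub>m m $$ (i,j)" using on i j by (auto simp: orthonormal_seq_def)
    finally show "(Uh * U) $$ (i,j) = 1\<^sub>m m $$ (i,j)" .
  qed (use U Uh in auto)
  hence "det Uh * det U = 1" using det_mult[OF Uh U] by simp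
  moreover have "det U = 0"
  proof -
    have "U = mat\<^sub>r m m (\<lambda>i. if i = n then 0\<^sub>v m else row U i)"
      by (intro eq_matI) (auto simp: U_def)
    moreover have "det (mat\<^sub>r m m (\<lambda>i. if i = n then 0\<^sub>v m else row U i)) = 0"
      by (rule det_row_0[OF nm]) (use U in auto)
    ultimately show ?thesis by simp
  qed
  ultimately show False by simp
qed

lemma cscalar_prod_normalize:
  assumes r: "r \<in> carrier_vec n" and r0: "r \<noteq> 0\<^sub>v n"
  shows "(complex_of_real (1 / sqrt (sqnorm r)) \<cdot>\<^sub>v r) \<bullet>c (complex_of_real (1 / sqrt (sqnorm r)) \<cdot>\<^sub>v r) = 1"
proof -
  have "sqnorm r > 0" using sqnorm_nonneg[OF r] sqnorm_eq_0_iff[OF r] r0 by linarith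
  thus ?thesis
    using r cscalar_prod_self[OF r]
    by (simp add: cscalar_prod_smult_left[of _ n] cscalar_prod_smult_right[of _ n]
        real_sqrt_mult[symmetric] flip: of_real_mult)
qed

lemma orthonormal_seq_extend:
  assumes on: "orthonormal_seq n vs m"
    and u: "u \<in> carrier_vec n" "u \<bullet>c u = 1" "\<forall>j<m. u \<bullet>c vs j = 0"
  shows "orthonormal_seq n (vs(m := u)) (Suc m)"
  unfolding orthonormal_seq_def
proof (intro conjI allI impI)
  fix j assume "j < Suc m" thus "(vs(m := u)) j \<in> carrier_vec n"
    using on u by (auto simp: orthonormal_seq_def)
next
  fix i j assume i: "i < Suc m" and j: "j < Suc m"
  show "(vs(m := u)) i \<bullet>c (vs(m := u)) j = (if i = j then 1 else 0)"
  proof (cases "i = m")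
    case True thus ?thesis using u j by auto
  next
    case False
    hence i': "i < m" using i by simp
    have "vs i \<bullet>c u = cnj (u \<bullet>c vs i)"
      using cnj_cscalar_prod[of u n "vs i"] u on i' by (auto simp: orthonormal_seq_def)
    thus ?thesis using on u i' j False by (auto simp: orthonormal_seq_def less_Suc_eq)
  qed
qed

text \<open>Greedy completion, which terminates because orthonormal families have at most \<open>n\<close> members.\<close>

lemma orthonormal_seq_maximal:
  assumes extend: "\<And>vs m. orthonormal_seq n vs m \<Longrightarrow> \<forall>j<m. Q (vs j) \<Longrightarrow> \<not> P vs m \<Longrightarrow>
     \<exists>u. u \<in> carrier_vec n \<and> Q u \<and> u \<bullet>c u = 1 \<and> (\<forall>j<m. u \<bullet>c vs j = 0)"
  shows "\<exists>vs m. orthonormal_seq n vs m \<and> (\<forall>j<m. Q (vs j)) \<and> P vs m"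
proof -
  define M where "M = {m. \<exists>vs. orthonormal_seq n vs m \<and> (\<forall>j<m. Q (vs j))}"
  have "M \<subseteq> {..n}" unfolding M_def using orthonormal_seq_length_le by auto
  hence fin: "finite M" using finite_subset by blast
  moreover have "0 \<in> M" unfolding M_def orthonormal_seq_def by auto
  ultimately have "Max M \<in> M" using Max_in by blast
  then obtain vs where on: "orthonormal_seq n vs (Max M)" and Q: "\<forall>j<Max M. Q (vs j)"
    unfolding M_def by auto
  show ?thesis
  proof (rule ccontr)
    assume "\<not> ?thesis"
    with on Q extend obtain u where u: "u \<in> carrier_vec n" "Q u" "u \<bullet>c u = 1"
      "\<forall>j<Max M. u \<bullet>c vs j = 0" by blast
    have "orthonormal_seq n (vs(Max M := u)) (Suc (Max M))"
      by (rule orthonormal_seq_extend[OF on u(1,3,4)])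
    moreover have "\<forall>j<Suc (Max M). Q ((vs(Max M := u)) j)" using Q u(2) by auto
    ultimately have "Suc (Max M) \<in> M" unfolding M_def by blast
    hence "Suc (Max M) \<le> Max M" using fin by simp
    thus False by simp
  qed
qed

lemma lincomb_seq_residual:
  assumes S: "is_subspace n S" and on: "orthonormal_seq n vs m" and inS: "\<forall>j<m. vs j \<in> S"
    and s: "s \<in> S" and ne: "s \<noteq> lincomb_seq n (\<lambda>j. s \<bullet>c vs j) vs m"
  defines "r \<equiv> s - lincomb_seq n (\<lambda>j. s \<bullet>c vs j) vs m"
  shows "r \<in> S" "r \<noteq> 0\<^sub>v n" "\<forall>j<m. r \<bullet>c vs j = 0"
proof -
  have sc: "s \<in> carrier_vec n" using s S subspace_carrier by blast
  show "r \<in> S" unfolding r_def using subspace_diff[OF S s lincomb_seq_in_subspace[OF S inS]] .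
  show "r \<noteq> 0\<^sub>v n"
  proof
    assume "r = 0\<^sub>v n"
    hence "s = 0\<^sub>v n + lincomb_seq n (\<lambda>j. s \<bullet>c vs j) vs m"
      using vec_diff_add_cancel[OF sc lincomb_seq_carrier] unfolding r_def by metis
    thus False using ne by simp
  qed
  show "\<forall>j<m. r \<bullet>c vs j = 0"
    using cscalar_prod_diff_left[OF sc lincomb_seq_carrier] cscalar_prod_lincomb_seq_basis[OF on]
      orthonormal_seq_carrier[OF on] unfolding r_def by simp
qed

lemma normalized_residual_extends:
  assumes S: "is_subspace n S" and on: "orthonormal_seq n vs m" and inS: "\<forall>j<m. vs j \<in> S"
    and s: "s \<in> S" and ne: "s \<noteq> lincomb_seq n (\<lambda>j. s \<bullet>c vs j) vs m"
  shows "\<exists>u. u \<in> carrier_vec n \<and> u \<in> S \<and> u \<bullet>c u = 1 \<and> (\<forall>j<m. u \<bullet>c vs j = 0)"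
proof -
  let ?r = "s - lincomb_seq n (\<lambda>j. s \<bullet>c vs j) vs m"
  note r = lincomb_seq_residual[OF S on inS s ne]
  have rc: "?r \<in> carrier_vec n" using r(1) S subspace_carrier by blast
  let ?u = "complex_of_real (1 / sqrt (sqnorm ?r)) \<cdot>\<^sub>v ?r"
  have "?u \<in> carrier_vec n" "?u \<in> S" "?u \<bullet>c ?u = 1" "\<forall>j<m. ?u \<bullet>c vs j = 0"
    using rc subspace_smult[OF S r(1)] cscalar_prod_normalize[OF rc r(2)] r(3)
      orthonormal_seq_carrier[OF on] cscalar_prod_smult_left[OF rc]
    by auto
  thus ?thesis by blast
qed

lemma subspace_orthonormal_basis:
  assumes S: "is_subspace n S"
  shows "\<exists>vs m. orthonormal_seq n vs m \<and> (\<forall>j<m. vs j \<in> S)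
           \<and> (\<forall>s\<in>S. s = lincomb_seq n (\<lambda>j. s \<bullet>c vs j) vs m)"
  by (rule orthonormal_seq_maximal) (use normalized_residual_extends[OF S] in blast)

section \<open>Orthogonal projections\<close>

lemma proj_eqI:
  assumes S: "is_subspace n S" and v: "v \<in> carrier_vec n"
    and p: "p \<in> S" and p_orth: "\<forall>y\<in>S. (v - p) \<bullet>c y = 0"
  shows "proj S v = p"
  unfolding proj_def
proof (rule the_equality)
  show "p \<in> S \<and> (\<forall>y\<in>S. (v - p) \<bullet>c y = 0)" using p p_orth by blast
next
  fix p' assume p': "p' \<in> S \<and> (\<forall>y\<in>S. (v - p') \<bullet>c y = 0)"
  have pc: "p \<in> carrier_vec n" "p' \<in> carrier_vec n" using p p' S subspace_carrier by blast+
  define d where "d = p' - p"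
  have dS: "d \<in> S" unfolding d_def using subspace_diff[OF S] p p' by blast
  have dc: "d \<in> carrier_vec n" unfolding d_def using pc by simp
  have "d = (v - p) - (v - p')" unfolding d_def using pc v by (intro eq_vecI) auto
  hence "d \<bullet>c d = (v - p) \<bullet>c d - (v - p') \<bullet>c d"
    using cscalar_prod_diff_left[of "v - p" n "v - p'" d] pc v dc by simp
  also have "\<dots> = 0" using p_orth p' dS by simp
  finally have "d = 0\<^sub>v n" using dc by simp
  thus "p' = p" unfolding d_def using pc by (metis vec_diff_add_cancel left_zero_vec)
qed

lemma proj_characterization:
  assumes S: "is_subspace n S" and v: "v \<in> carrier_vec n"
  shows "proj S v \<in> S" "\<forall>y\<in>S. (v - proj S v) \<bullet>c y = 0"
proof -
  obtain vs m where on: "orthonormal_seq n vs m" and inS: "\<forall>j<m. vs j \<in> S"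
    and sp: "\<forall>s\<in>S. s = lincomb_seq n (\<lambda>j. s \<bullet>c vs j) vs m"
    using subspace_orthonormal_basis[OF S] by blast
  have vc: "\<forall>j<m. vs j \<in> carrier_vec n" using orthonormal_seq_carrier[OF on] .
  define p where "p = lincomb_seq n (\<lambda>j. v \<bullet>c vs j) vs m"
  have pS: "p \<in> S" unfolding p_def using lincomb_seq_in_subspace[OF S inS] .
  have pc: "p \<in> carrier_vec n" unfolding p_def by simp
  have p_orth: "\<forall>y\<in>S. (v - p) \<bullet>c y = 0"
  proof
    fix y assume y: "y \<in> S"
    have "(v - p) \<bullet>c y = (v - p) \<bullet>c lincomb_seq n (\<lambda>j. y \<bullet>c vs j) vs m" using sp y by metis
    also have "\<dots> = (\<Sum>j<m. cnj (y \<bullet>c vs j) * ((v - p) \<bullet>c vs j))"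
      using vc v pc by (intro cscalar_prod_lincomb_seq_right) auto
    also have "\<dots> = 0"
      using cscalar_prod_diff_left[OF v pc] cscalar_prod_lincomb_seq_basis[OF on] vc
      unfolding p_def by simp
    finally show "(v - p) \<bullet>c y = 0" .
  qed
  show "proj S v \<in> S" "\<forall>y\<in>S. (v - proj S v) \<bullet>c y = 0"
    using proj_eqI[OF S v pS p_orth] pS p_orth by auto
qed

lemma proj_in: "is_subspace n S \<Longrightarrow> v \<in> carrier_vec n \<Longrightarrow> proj S v \<in> S"
  using proj_characterization by blast

lemma proj_carrier: "is_subspace n S \<Longrightarrow> v \<in> carrier_vec n \<Longrightarrow> proj S v \<in> carrier_vec n"
  using proj_in subspace_carrier by blast

lemma proj_orthogonal:
  "is_subspace n S \<Longrightarrow> v \<in> carrier_vec n \<Longrightarrow> y \<in> S \<Longrightarrow> (v - proj S v) \<bullet>c y = 0"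
  using proj_characterization by blast

lemma cscalar_prod_proj_left:
  assumes S: "is_subspace n S" and v: "v \<in> carrier_vec n" and y: "y \<in> S"
  shows "proj S v \<bullet>c y = v \<bullet>c y"
  using proj_orthogonal[OF S v y] cscalar_prod_diff_left[OF v proj_carrier[OF S v], of y]
    subspace_carrier[OF S y] by simp

lemma proj_of_mem: assumes S: "is_subspace n S" and s: "s \<in> S" shows "proj S s = s"
proof -
  have sc: "s \<in> carrier_vec n" using S s subspace_carrier by blast
  have "s - s = 0\<^sub>v n" using sc by (intro eq_vecI) auto
  thus ?thesis
    using proj_eqI[OF S sc s] subspace_carrier[OF S] cscalar_prod_zero_left by metis
qed

lemma proj_add:
  assumes S: "is_subspace n S" and v: "v \<in> carrier_vec n" and w: "w \<in> carrier_vec n"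
  shows "proj S (v + w) = proj S v + proj S w"
proof (rule proj_eqI[OF S])
  show "v + w \<in> carrier_vec n" using v w by simp
  show "proj S v + proj S w \<in> S" using subspace_add[OF S proj_in[OF S v] proj_in[OF S w]] .
  show "\<forall>y\<in>S. (v + w - (proj S v + proj S w)) \<bullet>c y = 0"
  proof
    fix y assume y: "y \<in> S"
    have pv: "proj S v \<in> carrier_vec n" and pw: "proj S w \<in> carrier_vec n"
      using proj_carrier S v w by blast+
    have "v + w - (proj S v + proj S w) = (v - proj S v) + (w - proj S w)"
      using pv pw v w by (intro eq_vecI) auto
    thus "(v + w - (proj S v + proj S w)) \<bullet>c y = 0"
      using cscalar_prod_add_left[of "v - proj S v" n "w - proj S w" y] pv pw v w
        subspace_carrier[OF S y] proj_orthogonal[OF S v y] proj_orthogonal[OF S w y] by simp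
  qed
qed

lemma proj_smult:
  assumes S: "is_subspace n S" and v: "v \<in> carrier_vec n"
  shows "proj S (c \<cdot>\<^sub>v v) = c \<cdot>\<^sub>v proj S v"
proof (rule proj_eqI[OF S])
  show "c \<cdot>\<^sub>v v \<in> carrier_vec n" using v by simp
  show "c \<cdot>\<^sub>v proj S v \<in> S" using subspace_smult[OF S proj_in[OF S v]] .
  show "\<forall>y\<in>S. (c \<cdot>\<^sub>v v - c \<cdot>\<^sub>v proj S v) \<bullet>c y = 0"
  proof
    fix y assume y: "y \<in> S"
    have pv: "proj S v \<in> carrier_vec n" using proj_carrier S v by blast
    have "c \<cdot>\<^sub>v v - c \<cdot>\<^sub>v proj S v = c \<cdot>\<^sub>v (v - proj S v)"
      using pv v by (intro eq_vecI) (auto simp: algebra_simps)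
    thus "(c \<cdot>\<^sub>v v - c \<cdot>\<^sub>v proj S v) \<bullet>c y = 0"
      using cscalar_prod_smult_left[of "v - proj S v" n y c] pv v subspace_carrier[OF S y]
        proj_orthogonal[OF S v y] by simp
  qed
qed

lemma proj_diff:
  assumes S: "is_subspace n S" and v: "v \<in> carrier_vec n" and w: "w \<in> carrier_vec n"
  shows "proj S (v - w) = proj S v - proj S w"
  using vec_diff_eq_add_smult[OF v w] proj_add[OF S v] proj_smult[OF S w] w
    vec_diff_eq_add_smult[OF proj_carrier[OF S v] proj_carrier[OF S w]] by simp

lemma sqnorm_proj_pythagoras:
  assumes S: "is_subspace n S" and v: "v \<in> carrier_vec n"
  shows "sqnorm v = sqnorm (proj S v) + sqnorm (v - proj S v)"
proof -
  have pv: "proj S v \<in> carrier_vec n" using proj_carrier S v by blast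
  have "proj S v \<bullet>c (v - proj S v) = 0"
    using cnj_cscalar_prod[of "v - proj S v" n "proj S v"] proj_orthogonal[OF S v proj_in[OF S v]] pv v
    by simp
  hence "sqnorm (proj S v + (v - proj S v)) = sqnorm (proj S v) + sqnorm (v - proj S v)"
    using sqnorm_add_orthogonal[OF pv] v pv by simp
  moreover have "proj S v + (v - proj S v) = v" using pv v by (intro eq_vecI) auto
  ultimately show ?thesis by simp
qed

section \<open>Viability\<close>

lemma viable_iff_sqnorm:
  assumes Y: "is_subspace n Y" and Z: "is_subspace n Z"
  shows "viable \<delta> Y Z \<longleftrightarrow> (\<forall>z\<in>Z. (1 - \<delta>) * sqnorm z \<le> sqnorm (proj Y z))"
proof
  assume via: "viable \<delta> Y Z"
  show "\<forall>z\<in>Z. (1 - \<delta>) * sqnorm z \<le> sqnorm (proj Y z)"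
  proof
    fix z assume z: "z \<in> Z"
    have zc: "z \<in> carrier_vec n" using subspace_carrier[OF Z z] .
    show "(1 - \<delta>) * sqnorm z \<le> sqnorm (proj Y z)"
    proof (cases "z = 0\<^sub>v n")
      case True
      thus ?thesis using sqnorm_eq_0_iff[OF zc] sqnorm_nonneg[OF proj_carrier[OF Y zc]] by simp
    next
      case False
      define N where "N = sqnorm z"
      have N: "N > 0" using sqnorm_nonneg[OF zc] sqnorm_eq_0_iff[OF zc] False unfolding N_def by linarith
      define k where "k = complex_of_real (1 / sqrt N)"
      have kz: "k \<cdot>\<^sub>v z \<in> Z" "k \<cdot>\<^sub>v z \<in> carrier_vec n" using subspace_smult[OF Z z] zc by auto
      have "(k \<cdot>\<^sub>v z) \<bullet>c (k \<cdot>\<^sub>v z) = 1" unfolding k_def N_def by (rule cscalar_prod_normalize[OF zc False])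
      hence "vnorm (k \<cdot>\<^sub>v z) = 1" unfolding vnorm_def by simp
      hence "1 - \<delta> \<le> (vnorm (proj Y (k \<cdot>\<^sub>v z)))\<^sup>2" using via kz unfolding viable_def by blast
      also have "\<dots> = sqnorm (k \<cdot>\<^sub>v proj Y z)"
        using vnorm_power2[OF proj_carrier[OF Y kz(2)]] proj_smult[OF Y zc] by simp
      also have "\<dots> = sqnorm (proj Y z) / N"
        using sqnorm_smult[OF proj_carrier[OF Y zc]] N
        by (simp add: k_def norm_divide power_divide del: of_real_divide)
      finally show ?thesis using N unfolding N_def by (simp add: pos_le_divide_eq)
    qed
  qed
next
  assume "\<forall>z\<in>Z. (1 - \<delta>) * sqnorm z \<le> sqnorm (proj Y z)"
  thus "viable \<delta> Y Z"
    unfolding viable_def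
  proof (intro ballI impI)
    fix z assume "\<forall>z\<in>Z. (1 - \<delta>) * sqnorm z \<le> sqnorm (proj Y z)" "z \<in> Z" "vnorm z = 1"
    moreover have "z \<in> carrier_vec n" using subspace_carrier[OF Z \<open>z \<in> Z\<close>] .
    ultimately show "1 - \<delta> \<le> (vnorm (proj Y z))\<^sup>2"
      using vnorm_power2[of z n] vnorm_power2[OF proj_carrier[OF Y]] by force
  qed
qed

text \<open>For \<open>y = P\<^sub>Y z\<close>: \<open>\<parallel>y\<parallel>\<^sup>2 = \<langle>y, z\<rangle> = \<langle>P\<^sub>Z y, z\<rangle> \<le> \<parallel>P\<^sub>Z y\<parallel> \<parallel>z\<parallel>\<close>.\<close>

lemma sqnorm_proj_proj_ge:
  assumes Y: "is_subspace n Y" and Z: "is_subspace n Z" and z: "z \<in> Z"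
    and via: "(1 - \<delta>) * sqnorm z \<le> sqnorm (proj Y z)"
  shows "(1 - \<delta>) * sqnorm (proj Y z) \<le> sqnorm (proj Z (proj Y z))"
proof -
  have zc: "z \<in> carrier_vec n" using subspace_carrier[OF Z z] .
  define y where "y = proj Y z"
  have yc: "y \<in> carrier_vec n" unfolding y_def using proj_carrier[OF Y zc] .
  have pyc: "proj Z y \<in> carrier_vec n" using proj_carrier[OF Z yc] .
  have "y \<bullet>c z = cnj (z \<bullet>c y)" using cnj_cscalar_prod[OF zc yc] by simp
  also have "z \<bullet>c y = y \<bullet>c y"
    unfolding y_def using cscalar_prod_proj_left[OF Y zc proj_in[OF Y zc]] by simp
  finally have "proj Z y \<bullet>c z = complex_of_real (sqnorm y)"
    using cscalar_prod_proj_left[OF Z yc z] cscalar_prod_self[OF yc] by simp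
  hence cs: "sqnorm y * sqnorm y \<le> sqnorm (proj Z y) * sqnorm z"
    using cauchy_schwarz_cscalar_prod[OF pyc zc] by (simp add: power2_eq_square)
  have "sqnorm z > 0 \<or> z = 0\<^sub>v n" using sqnorm_nonneg[OF zc] sqnorm_eq_0_iff[OF zc] by force
  thus ?thesis
  proof
    assume z_pos: "sqnorm z > 0"
    have "(1 - \<delta>) * sqnorm y * sqnorm z = sqnorm y * ((1 - \<delta>) * sqnorm z)" by simp
    also have "\<dots> \<le> sqnorm y * sqnorm y"
      using via sqnorm_nonneg[OF yc] unfolding y_def by (intro mult_left_mono)
    also have "\<dots> \<le> sqnorm (proj Z y) * sqnorm z" using cs .
    finally show ?thesis using z_pos unfolding y_def by simp
  next
    assume "z = 0\<^sub>v n"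
    hence "y = 0\<^sub>v n" unfolding y_def using proj_of_mem[OF Y subspace_zero[OF Y]] by simp
    thus ?thesis using sqnorm_nonneg[OF pyc] unfolding y_def by (simp add: sqnorm_def)
  qed
qed

lemma subspace_proj_image:
  assumes U: "is_subspace n U" and S: "is_subspace n S"
  shows "is_subspace n (proj S ` U)"
  unfolding is_subspace_def
proof (intro conjI ballI allI)
  show "proj S ` U \<subseteq> carrier_vec n" using proj_carrier[OF S] subspace_carrier[OF U] by blast
  show "0\<^sub>v n \<in> proj S ` U"
    using proj_of_mem[OF S subspace_zero[OF S]] subspace_zero[OF U] by (metis image_eqI)
next
  fix a b assume "a \<in> proj S ` U" "b \<in> proj S ` U"
  then obtain u v where "u \<in> U" "v \<in> U" "a = proj S u" "b = proj S v" by blast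
  thus "a + b \<in> proj S ` U"
    using proj_add[OF S] subspace_add[OF U] subspace_carrier[OF U] by (metis image_eqI)
next
  fix c a assume "a \<in> proj S ` U"
  then obtain u where "u \<in> U" "a = proj S u" by blast
  thus "c \<cdot>\<^sub>v a \<in> proj S ` U"
    using proj_smult[OF S] subspace_smult[OF U] subspace_carrier[OF U] by (metis image_eqI)
qed

text \<open>The part of \<open>z \<in> Z\<close> orthogonal to \<open>P\<^sub>Z U\<close> is orthogonal to \<open>U\<close> itself.\<close>

lemma subset_proj_image:
  assumes U: "is_subspace n U" and Z: "is_subspace n Z"
    and no_orth: "\<And>z. z \<in> Z \<Longrightarrow> \<forall>u\<in>U. z \<bullet>c u = 0 \<Longrightarrow> z = 0\<^sub>v n"
  shows "Z \<subseteq> proj Z ` U"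
proof
  fix z assume z: "z \<in> Z"
  let ?R = "proj Z ` U"
  have R: "is_subspace n ?R" using subspace_proj_image[OF U Z] .
  have zc: "z \<in> carrier_vec n" using subspace_carrier[OF Z z] .
  have pz: "proj ?R z \<in> Z" "proj ?R z \<in> carrier_vec n"
    using proj_in[OF R zc] proj_in[OF Z] subspace_carrier[OF U] proj_carrier[OF R zc] by auto
  have "\<forall>u\<in>U. (z - proj ?R z) \<bullet>c u = 0"
  proof
    fix u assume u: "u \<in> U"
    have uc: "u \<in> carrier_vec n" using subspace_carrier[OF U u] .
    have zz: "z - proj ?R z \<in> Z" "z - proj ?R z \<in> carrier_vec n"
      using subspace_diff[OF Z z pz(1)] zc pz(2) by auto
    have "(z - proj ?R z) \<bullet>c u = cnj (u \<bullet>c (z - proj ?R z))" using cnj_cscalar_prod[OF uc zz(2)] by simp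
    also have "u \<bullet>c (z - proj ?R z) = proj Z u \<bullet>c (z - proj ?R z)"
      using cscalar_prod_proj_left[OF Z uc zz(1)] by simp
    also have "\<dots> = cnj ((z - proj ?R z) \<bullet>c proj Z u)"
      using cnj_cscalar_prod[OF zz(2) proj_carrier[OF Z uc]] by simp
    also have "(z - proj ?R z) \<bullet>c proj Z u = 0" using proj_orthogonal[OF R zc] u by blast
    finally show "(z - proj ?R z) \<bullet>c u = 0" by simp
  qed
  hence "z - proj ?R z = 0\<^sub>v n" using no_orth subspace_diff[OF Z z pz(1)] by blast
  hence "z = proj ?R z" using zc pz(2) by (metis vec_diff_add_cancel left_zero_vec)
  thus "z \<in> ?R" using proj_in[OF R zc] by simp
qed

text \<open>Writing \<open>z = P\<^sub>Z u\<close>, we have \<open>\<parallel>z\<parallel>\<^sup>2 = \<langle>P\<^sub>U z, u\<rangle> \<le> \<parallel>P\<^sub>U z\<parallel> \<parallel>u\<parallel>\<close> and \<open>(1 - c) \<parallel>u\<parallel>\<^sup>2 \<le> \<parallel>z\<parallel>\<^sup>2\<close>.\<close>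

lemma sqnorm_proj_ge_if_proj_image:
  assumes U: "is_subspace n U" and Z: "is_subspace n Z" and onto: "Z \<subseteq> proj Z ` U"
    and keeps: "\<forall>u\<in>U. (1 - c) * sqnorm u \<le> sqnorm (proj Z u)" and z: "z \<in> Z"
  shows "(1 - c) * sqnorm z \<le> sqnorm (proj U z)"
proof -
  have zc: "z \<in> carrier_vec n" using subspace_carrier[OF Z z] .
  obtain u where u: "u \<in> U" and zu: "z = proj Z u" using onto z by blast
  have uc: "u \<in> carrier_vec n" using subspace_carrier[OF U u] .
  have tc: "proj U z \<in> carrier_vec n" using proj_carrier[OF U zc] .
  have "proj U z \<bullet>c u = cnj (u \<bullet>c z)"
    using cscalar_prod_proj_left[OF U zc u] cnj_cscalar_prod[OF uc zc] by simp
  also have "u \<bullet>c z = z \<bullet>c z" using cscalar_prod_proj_left[OF Z uc z] zu by simp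
  finally have "proj U z \<bullet>c u = complex_of_real (sqnorm z)" using cscalar_prod_self[OF zc] by simp
  hence cs: "sqnorm z * sqnorm z \<le> sqnorm (proj U z) * sqnorm u"
    using cauchy_schwarz_cscalar_prod[OF tc uc] by (simp add: power2_eq_square)
  show ?thesis
  proof (cases "1 - c \<le> 0 \<or> z = 0\<^sub>v n")
    case True
    moreover have "1 - c \<le> 0 \<Longrightarrow> (1 - c) * sqnorm z \<le> 0"
      using sqnorm_nonneg[OF zc] by (simp add: mult_nonpos_nonneg)
    ultimately show ?thesis using sqnorm_nonneg[OF tc] by (auto simp: sqnorm_def)
  next
    case False
    hence c: "0 < 1 - c" and z_pos: "0 < sqnorm z"
      using sqnorm_nonneg[OF zc] sqnorm_eq_0_iff[OF zc] by force+
    have "(1 - c) * sqnorm z * sqnorm z \<le> (1 - c) * (sqnorm (proj U z) * sqnorm u)"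
      using cs c by simp
    also have "\<dots> = sqnorm (proj U z) * ((1 - c) * sqnorm u)" by simp
    also have "\<dots> \<le> sqnorm (proj U z) * sqnorm z"
      using keeps u zu sqnorm_nonneg[OF tc] by (intro mult_left_mono) auto
    finally show ?thesis using z_pos by simp
  qed
qed

section \<open>Hermitian operators on a subspace\<close>

definition hermitian_on :: "nat \<Rightarrow> complex vec set \<Rightarrow> (complex vec \<Rightarrow> complex vec) \<Rightarrow> bool" where
  "hermitian_on n S g \<longleftrightarrow> (\<forall>s\<in>S. g s \<in> S) \<and> (\<forall>s\<in>S. \<forall>t\<in>S. g (s + t) = g s + g t)
     \<and> (\<forall>s\<in>S. \<forall>c. g (c \<cdot>\<^sub>v s) = c \<cdot>\<^sub>v g s) \<and> (\<forall>s\<in>S. \<forall>t\<in>S. g s \<bullet>c t = s \<bullet>c g t)"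

lemma hermitian_onD:
  assumes "hermitian_on n S g"
  shows "s \<in> S \<Longrightarrow> g s \<in> S" "s \<in> S \<Longrightarrow> t \<in> S \<Longrightarrow> g (s + t) = g s + g t"
    "s \<in> S \<Longrightarrow> g (c \<cdot>\<^sub>v s) = c \<cdot>\<^sub>v g s" "s \<in> S \<Longrightarrow> t \<in> S \<Longrightarrow> g s \<bullet>c t = s \<bullet>c g t"
  using assms unfolding hermitian_on_def by auto

lemma hermitian_on_invariant_subset:
  "hermitian_on n S g \<Longrightarrow> S' \<subseteq> S \<Longrightarrow> \<forall>s\<in>S'. g s \<in> S' \<Longrightarrow> hermitian_on n S' g"
  unfolding hermitian_on_def by blast

lemma hermitian_on_lincomb_seq:
  assumes S: "is_subspace n S" and g: "hermitian_on n S g" and vs: "\<forall>j<m. vs j \<in> S"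
  shows "g (lincomb_seq n c vs m) = lincomb_seq n c (\<lambda>j. g (vs j)) m"
  using vs
proof (induction m)
  case 0
  have z: "0\<^sub>v n \<in> S" using subspace_zero[OF S] .
  have "(0 :: complex) \<cdot>\<^sub>v 0\<^sub>v n = 0\<^sub>v n" by (intro eq_vecI) auto
  hence "g (0\<^sub>v n) = g (0 \<cdot>\<^sub>v 0\<^sub>v n)" by simp
  also have "\<dots> = 0 \<cdot>\<^sub>v g (0\<^sub>v n)" using hermitian_onD(3)[OF g z] .
  also have "\<dots> = 0\<^sub>v n" using subspace_carrier[OF S hermitian_onD(1)[OF g z]] by (intro eq_vecI) auto
  finally show ?case by (simp add: lincomb_seq_0)
next
  case (Suc m)
  have vm: "vs m \<in> S" using Suc.prems by auto
  have vmc: "vs m \<in> carrier_vec n" using subspace_carrier[OF S vm] .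
  have gvmc: "g (vs m) \<in> carrier_vec n" using subspace_carrier[OF S hermitian_onD(1)[OF g vm]] .
  have l: "lincomb_seq n c vs m \<in> S" using lincomb_seq_in_subspace[OF S] Suc.prems by auto
  have "g (lincomb_seq n c vs (Suc m)) = g (lincomb_seq n c vs m) + c m \<cdot>\<^sub>v g (vs m)"
    using lincomb_seq_Suc[of vs m n c, OF vmc] hermitian_onD(2)[OF g l subspace_smult[OF S vm]]
      hermitian_onD(3)[OF g vm] by simp
  also have "\<dots> = lincomb_seq n c (\<lambda>j. g (vs j)) (Suc m)"
    using Suc lincomb_seq_Suc[of "\<lambda>j. g (vs j)" m n c, OF gvmc] by simp
  finally show ?case .
qed

lemma hermitian_on_eigenvalue_real:
  assumes g: "hermitian_on n S g" and x: "x \<in> S" "x \<in> carrier_vec n" "x \<noteq> 0\<^sub>v n"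
    and gx: "g x = \<mu> \<cdot>\<^sub>v x"
  shows "\<mu> = complex_of_real (Re \<mu>)"
proof -
  have "\<mu> * (x \<bullet>c x) = cnj \<mu> * (x \<bullet>c x)"
    using hermitian_onD(4)[OF g x(1) x(1)] cscalar_prod_smult_left[OF x(2) x(2)]
      cscalar_prod_smult_right[OF x(2) x(2)] gx by simp
  moreover have "x \<bullet>c x \<noteq> 0" using x by simp
  ultimately have "\<mu> = cnj \<mu>" by simp
  hence "Im \<mu> = 0" by (metis cnj.sel(2) neg_equal_zero)
  thus ?thesis by (simp add: complex_eq_iff)
qed

lemma hermitian_on_eigenvectors_orthogonal:
  assumes g: "hermitian_on n S g" and y: "y \<in> S" "y \<in> carrier_vec n" and u: "u \<in> S" "u \<in> carrier_vec n"
    and gy: "g y = complex_of_real e \<cdot>\<^sub>v y" and gu: "g u = complex_of_real d \<cdot>\<^sub>v u" and "d \<noteq> e"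
  shows "y \<bullet>c u = 0"
proof -
  have "complex_of_real e * (y \<bullet>c u) = complex_of_real d * (y \<bullet>c u)"
    using hermitian_onD(4)[OF g y(1) u(1)] cscalar_prod_smult_left[OF y(2) u(2)]
      cscalar_prod_smult_right[OF y(2) u(2)] gy gu by simp
  thus ?thesis using \<open>d \<noteq> e\<close> by simp
qed

text \<open>The fundamental theorem of algebra, applied to the characteristic polynomial of the matrix of \<open>g\<close>
  in an orthonormal basis of \<open>S\<close>.\<close>

lemma hermitian_on_eigenvector:
  assumes S: "is_subspace n S" and g: "hermitian_on n S g" and S_nonzero: "s0 \<in> S" "s0 \<noteq> 0\<^sub>v n"
  shows "\<exists>x\<in>S. x \<noteq> 0\<^sub>v n \<and> (\<exists>\<mu>. g x = \<mu> \<cdot>\<^sub>v x)"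
proof -
  obtain vs m where on: "orthonormal_seq n vs m" and inS: "\<forall>j<m. vs j \<in> S"
    and sp: "\<forall>s\<in>S. s = lincomb_seq n (\<lambda>j. s \<bullet>c vs j) vs m"
    using subspace_orthonormal_basis[OF S] by blast
  have vc: "\<forall>j<m. vs j \<in> carrier_vec n" using orthonormal_seq_carrier[OF on] .
  have gvc: "\<forall>j<m. g (vs j) \<in> carrier_vec n" using inS hermitian_onD(1)[OF g] subspace_carrier[OF S] by blast
  have "m \<noteq> 0" using sp S_nonzero lincomb_seq_0 by metis
  define M where "M = mat m m (\<lambda>(i,j). g (vs j) \<bullet>c vs i)"
  have M: "M \<in> carrier_mat m m" unfolding M_def by simp
  have "\<not> constant (poly (char_poly M))"
    using \<open>m \<noteq> 0\<close> degree_monic_char_poly[OF M] constant_degree[of "char_poly M"] by simp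
  then obtain \<mu> where "poly (char_poly M) \<mu> = 0" using fundamental_theorem_of_algebra by blast
  hence "eigenvalue M \<mu>" using eigenvalue_root_char_poly[OF M] by simp
  then obtain c where c: "c \<in> carrier_vec m" "c \<noteq> 0\<^sub>v m" "M *\<^sub>v c = \<mu> \<cdot>\<^sub>v c"
    unfolding eigenvalue_def eigenvector_def using M by auto
  define x where "x = lincomb_seq n (\<lambda>j. c $ j) vs m"
  have xS: "x \<in> S" unfolding x_def using lincomb_seq_in_subspace[OF S inS] .
  have xc: "x \<in> carrier_vec n" unfolding x_def by simp
  have x_coord: "\<And>i. i < m \<Longrightarrow> x \<bullet>c vs i = c $ i"
    unfolding x_def using cscalar_prod_lincomb_seq_basis[OF on] by simp
  have "x \<noteq> 0\<^sub>v n"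
    using c(1,2) lincomb_seq_eq_0D[OF on] unfolding x_def by (auto intro!: eq_vecI)
  moreover have "g x = \<mu> \<cdot>\<^sub>v x"
  proof (rule lincomb_seq_coordinates_eqI[OF sp hermitian_onD(1)[OF g xS] subspace_smult[OF S xS]])
    fix i assume i: "i < m"
    have "g x \<bullet>c vs i = (\<Sum>j<m. c $ j * (g (vs j) \<bullet>c vs i))"
      unfolding x_def hermitian_on_lincomb_seq[OF S g inS]
      using gvc vc i by (intro cscalar_prod_lincomb_seq_left) auto
    also have "\<dots> = (M *\<^sub>v c) $ i"
      using M c(1) i by (simp add: M_def scalar_prod_def lessThan_atLeast0 mult.commute)
    also have "\<dots> = (\<mu> \<cdot>\<^sub>v x) \<bullet>c vs i"
      using c(3) c(1) i cscalar_prod_smult_left[OF xc, of "vs i" \<mu>] vc x_coord by simp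
    finally show "g x \<bullet>c vs i = (\<mu> \<cdot>\<^sub>v x) \<bullet>c vs i" .
  qed
  ultimately show ?thesis using xS by blast
qed

lemma hermitian_on_real_eigenvector:
  assumes S: "is_subspace n S" and g: "hermitian_on n S g" and S_nonzero: "s0 \<in> S" "s0 \<noteq> 0\<^sub>v n"
  shows "\<exists>u\<in>S. u \<noteq> 0\<^sub>v n \<and> (\<exists>d::real. g u = complex_of_real d \<cdot>\<^sub>v u)"
proof -
  obtain x \<mu> where x: "x \<in> S" "x \<noteq> 0\<^sub>v n" and gx: "g x = \<mu> \<cdot>\<^sub>v x"
    using hermitian_on_eigenvector[OF S g S_nonzero] by blast
  hence "g x = complex_of_real (Re \<mu>) \<cdot>\<^sub>v x"
    using hermitian_on_eigenvalue_real[OF g x(1) subspace_carrier[OF S x(1)] x(2)] by simp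
  thus ?thesis using x by blast
qed

lemma hermitian_on_orthogonal_to_eigenvectors:
  assumes S: "is_subspace n S" and g: "hermitian_on n S g" and vs: "\<forall>j<m. vs j \<in> S"
    and eig: "\<forall>j<m. \<exists>d::real. g (vs j) = complex_of_real d \<cdot>\<^sub>v vs j"
  shows "hermitian_on n {x \<in> S. \<forall>j<m. x \<bullet>c vs j = 0} g"
proof (rule hermitian_on_invariant_subset[OF g], blast, intro ballI)
  fix x assume x: "x \<in> {x \<in> S. \<forall>j<m. x \<bullet>c vs j = 0}"
  hence xS: "x \<in> S" and xc: "x \<in> carrier_vec n" using subspace_carrier[OF S] by auto
  have "g x \<bullet>c vs j = 0" if j: "j < m" for j
  proof -
    obtain d where d: "g (vs j) = complex_of_real d \<cdot>\<^sub>v vs j" using eig j by blast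
    have "g x \<bullet>c vs j = x \<bullet>c g (vs j)" using hermitian_onD(4)[OF g xS] vs j by blast
    also have "\<dots> = complex_of_real d * (x \<bullet>c vs j)"
      unfolding d using cscalar_prod_smult_right[OF xc] subspace_carrier[OF S] vs j by simp
    finally show ?thesis using x j by simp
  qed
  thus "g x \<in> {x \<in> S. \<forall>j<m. x \<bullet>c vs j = 0}" using hermitian_onD(1)[OF g xS] by blast
qed

definition orthonormal_eigenbasis ::
  "nat \<Rightarrow> complex vec set \<Rightarrow> (complex vec \<Rightarrow> complex vec) \<Rightarrow> (nat \<Rightarrow> complex vec) \<Rightarrow> (nat \<Rightarrow> real)
    \<Rightarrow> nat \<Rightarrow> bool" where
  "orthonormal_eigenbasis n S g vs ds m \<longleftrightarrow> orthonormal_seq n vs m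
     \<and> (\<forall>j<m. vs j \<in> S \<and> g (vs j) = complex_of_real (ds j) \<cdot>\<^sub>v vs j)
     \<and> (\<forall>s\<in>S. s = lincomb_seq n (\<lambda>j. s \<bullet>c vs j) vs m)"

text \<open>The spectral theorem, proved by greedily adding unit eigenvectors of the restriction of \<open>g\<close> to
  the orthogonal complement of those already chosen.\<close>

lemma hermitian_on_eigenbasis:
  assumes S: "is_subspace n S" and g: "hermitian_on n S g"
  shows "\<exists>vs ds m. orthonormal_eigenbasis n S g vs ds m"
proof -
  let ?Q = "\<lambda>u. u \<in> S \<and> (\<exists>d::real. g u = complex_of_real d \<cdot>\<^sub>v u)"
  have "\<exists>vs m. orthonormal_seq n vs m \<and> (\<forall>j<m. ?Q (vs j))
          \<and> (\<forall>s\<in>S. s = lincomb_seq n (\<lambda>j. s \<bullet>c vs j) vs m)"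
  proof (rule orthonormal_seq_maximal)
    fix vs m assume on: "orthonormal_seq n vs m" and Q: "\<forall>j<m. ?Q (vs j)"
      and "\<not> (\<forall>s\<in>S. s = lincomb_seq n (\<lambda>j. s \<bullet>c vs j) vs m)"
    then obtain s where s: "s \<in> S" and ne: "s \<noteq> lincomb_seq n (\<lambda>j. s \<bullet>c vs j) vs m" by blast
    have inS: "\<forall>j<m. vs j \<in> S" using Q by blast
    define S' where "S' = {x \<in> S. \<forall>j<m. x \<bullet>c vs j = 0}"
    have S': "is_subspace n S'"
      using subspace_orthogonal_to_seq[OF S orthonormal_seq_carrier[OF on], of "\<lambda>_. True"]
      unfolding S'_def by simp
    have g': "hermitian_on n S' g"
      unfolding S'_def using hermitian_on_orthogonal_to_eigenvectors[OF S g inS] Q by blast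
    note r = lincomb_seq_residual[OF S on inS s ne]
    obtain u d where u: "u \<in> S'" "u \<noteq> 0\<^sub>v n" and ud: "g u = complex_of_real d \<cdot>\<^sub>v u"
      using hermitian_on_real_eigenvector[OF S' g', of "s - lincomb_seq n (\<lambda>j. s \<bullet>c vs j) vs m"] r
      unfolding S'_def by blast
    have uS: "u \<in> S" using u unfolding S'_def by blast
    have uc: "u \<in> carrier_vec n" using subspace_carrier[OF S uS] .
    define w where "w = complex_of_real (1 / sqrt (sqnorm u)) \<cdot>\<^sub>v u"
    have "g w = complex_of_real d \<cdot>\<^sub>v w"
      unfolding w_def using hermitian_onD(3)[OF g uS] ud uc by (auto intro!: eq_vecI)
    moreover have "w \<bullet>c w = 1" unfolding w_def by (rule cscalar_prod_normalize[OF uc u(2)])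
    moreover have "w \<in> S'" unfolding w_def using subspace_smult[OF S' u(1)] .
    moreover have "w \<in> carrier_vec n" unfolding w_def using uc by simp
    ultimately show "\<exists>u. u \<in> carrier_vec n \<and> ?Q u \<and> u \<bullet>c u = 1 \<and> (\<forall>j<m. u \<bullet>c vs j = 0)"
      unfolding S'_def by blast
  qed
  then obtain vs m where on: "orthonormal_seq n vs m" and Q: "\<forall>j<m. ?Q (vs j)"
    and sp: "\<forall>s\<in>S. s = lincomb_seq n (\<lambda>j. s \<bullet>c vs j) vs m" by blast
  define ds where "ds = (\<lambda>j. SOME d::real. g (vs j) = complex_of_real d \<cdot>\<^sub>v vs j)"
  have "\<forall>j<m. vs j \<in> S \<and> g (vs j) = complex_of_real (ds j) \<cdot>\<^sub>v vs j"
    using Q someI_ex unfolding ds_def by (metis (mono_tags, lifting))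
  thus ?thesis using on sp unfolding orthonormal_eigenbasis_def by blast
qed

lemma orthonormal_eigenbasis_sqnorm:
  assumes b: "orthonormal_eigenbasis n S g vs ds m" and v: "v \<in> S"
  shows "sqnorm v = (\<Sum>j<m. (cmod (v \<bullet>c vs j))\<^sup>2)"
proof -
  have on: "orthonormal_seq n vs m" using b unfolding orthonormal_eigenbasis_def by blast
  have "v \<bullet>c v = lincomb_seq n (\<lambda>j. v \<bullet>c vs j) vs m \<bullet>c lincomb_seq n (\<lambda>j. v \<bullet>c vs j) vs m"
    using b v unfolding orthonormal_eigenbasis_def by metis
  also have "\<dots> = (\<Sum>j<m. complex_of_real ((cmod (v \<bullet>c vs j))\<^sup>2))"
    unfolding cscalar_prod_lincomb_seq[OF on] by (simp add: complex_norm_square[symmetric])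
  finally show ?thesis unfolding sqnorm_def by (simp add: Re_sum)
qed

lemma orthonormal_eigenbasis_eigenvalue_ge:
  assumes b: "orthonormal_eigenbasis n S g vs ds m"
    and lower: "\<forall>y\<in>S. a * sqnorm y \<le> Re (y \<bullet>c g y)" and j: "j < m"
  shows "a \<le> ds j"
proof -
  have on: "orthonormal_seq n vs m" and eig: "vs j \<in> S" "g (vs j) = complex_of_real (ds j) \<cdot>\<^sub>v vs j"
    using b j unfolding orthonormal_eigenbasis_def by auto
  have uc: "vs j \<in> carrier_vec n" using orthonormal_seq_carrier[OF on] j by blast
  have unit: "vs j \<bullet>c vs j = 1" using on j unfolding orthonormal_seq_def by simp
  have "a * sqnorm (vs j) \<le> Re (vs j \<bullet>c g (vs j))" using lower eig(1) by blast
  thus ?thesis using eig(2) cscalar_prod_smult_right[OF uc uc] unit by (simp add: sqnorm_def)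
qed

lemma orthonormal_eigenbasis_quadratic_form:
  assumes S: "is_subspace n S" and g: "hermitian_on n S g"
    and b: "orthonormal_eigenbasis n S g vs ds m" and v: "v \<in> S"
  shows "Re (v \<bullet>c g v) = (\<Sum>j<m. ds j * (cmod (v \<bullet>c vs j))\<^sup>2)"
proof -
  have on: "orthonormal_seq n vs m" and eig: "\<forall>j<m. vs j \<in> S \<and> g (vs j) = complex_of_real (ds j) \<cdot>\<^sub>v vs j"
    and v_exp: "v = lincomb_seq n (\<lambda>j. v \<bullet>c vs j) vs m"
    using b v unfolding orthonormal_eigenbasis_def by auto
  define c where "c = (\<lambda>j. v \<bullet>c vs j)"
  have "g v = lincomb_seq n c (\<lambda>j. g (vs j)) m"
    using hermitian_on_lincomb_seq[OF S g] eig v_exp unfolding c_def by metis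
  also have "\<dots> = lincomb_seq n (\<lambda>j. c j * complex_of_real (ds j)) vs m"
    using eig orthonormal_seq_carrier[OF on]
    unfolding lincomb_seq_def by (intro eq_vecI) (auto simp: ac_simps intro!: sum.cong)
  finally have "v \<bullet>c g v = lincomb_seq n c vs m \<bullet>c lincomb_seq n (\<lambda>j. c j * complex_of_real (ds j)) vs m"
    using v_exp unfolding c_def by metis
  also have "\<dots> = (\<Sum>j<m. complex_of_real (ds j * (cmod (c j))\<^sup>2))"
    unfolding cscalar_prod_lincomb_seq[OF on]
    by (intro sum.cong) (simp_all add: complex_norm_square[symmetric] ac_simps)
  finally show ?thesis unfolding c_def by (simp add: Re_sum)
qed

section \<open>Spectral subspaces\<close>

definition eigenspan ::
  "nat \<Rightarrow> complex vec set \<Rightarrow> (complex vec \<Rightarrow> complex vec) \<Rightarrow> real \<Rightarrow> real \<Rightarrow> complex vec set" where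
  "eigenspan n S g a b = vspan n {y \<in> S. \<exists>e::real. a \<le> e \<and> e \<le> b \<and> g y = complex_of_real e \<cdot>\<^sub>v y}"

lemma spectral_subspace_eq_eigenspan:
  "spectral_subspace n Y X a b = eigenspan n Y (\<lambda>y. proj Y (X *\<^sub>v y)) a b"
  unfolding spectral_subspace_def eigenspan_def ..

lemma eigenspan_subspace:
  assumes S: "is_subspace n S"
  shows "is_subspace n (eigenspan n S g a b)" "eigenspan n S g a b \<subseteq> S"
proof -
  let ?E = "{y \<in> S. \<exists>e::real. a \<le> e \<and> e \<le> b \<and> g y = complex_of_real e \<cdot>\<^sub>v y}"
  have E: "?E \<subseteq> S" by blast
  hence "?E \<subseteq> carrier_vec n" using subspace_carrier[OF S] by blast
  thus "is_subspace n (eigenspan n S g a b)" unfolding eigenspan_def by (rule vspan_subspace)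
  show "eigenspan n S g a b \<subseteq> S" unfolding eigenspan_def using vspan_least[OF S E] .
qed

lemma quadratic_form_le_on_eigenspan:
  assumes S: "is_subspace n S" and g: "hermitian_on n S g" and v: "v \<in> eigenspan n S g a b"
  shows "Re (v \<bullet>c g v) \<le> b * sqnorm v"
proof -
  obtain vs ds m where basis: "orthonormal_eigenbasis n S g vs ds m"
    using hermitian_on_eigenbasis[OF S g] by blast
  have on: "orthonormal_seq n vs m" and eig: "\<forall>j<m. vs j \<in> S \<and> g (vs j) = complex_of_real (ds j) \<cdot>\<^sub>v vs j"
    using basis unfolding orthonormal_eigenbasis_def by auto
  have vsc: "\<forall>j<m. vs j \<in> carrier_vec n" using orthonormal_seq_carrier[OF on] .
  define L where "L = {x \<in> S. \<forall>j<m. b < ds j \<longrightarrow> x \<bullet>c vs j = 0}"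
  have "eigenspan n S g a b \<subseteq> L"
    unfolding eigenspan_def
  proof (rule vspan_least)
    show "is_subspace n L" unfolding L_def by (rule subspace_orthogonal_to_seq[OF S vsc])
    show "{y \<in> S. \<exists>e. a \<le> e \<and> e \<le> b \<and> g y = complex_of_real e \<cdot>\<^sub>v y} \<subseteq> L"
    proof (intro subsetI)
      fix y assume "y \<in> {y \<in> S. \<exists>e. a \<le> e \<and> e \<le> b \<and> g y = complex_of_real e \<cdot>\<^sub>v y}"
      then obtain e where y: "y \<in> S" "e \<le> b" "g y = complex_of_real e \<cdot>\<^sub>v y" by blast
      have "y \<bullet>c vs j = 0" if "j < m" "b < ds j" for j
        using hermitian_on_eigenvectors_orthogonal[OF g y(1) subspace_carrier[OF S y(1)], of "vs j" e "ds j"]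
          eig vsc y that by simp
      thus "y \<in> L" unfolding L_def using y(1) by blast
    qed
  qed
  hence vL: "v \<in> L" using v by blast
  hence vS: "v \<in> S" unfolding L_def by blast
  have "Re (v \<bullet>c g v) = (\<Sum>j<m. ds j * (cmod (v \<bullet>c vs j))\<^sup>2)"
    using orthonormal_eigenbasis_quadratic_form[OF S g basis vS] .
  also have "\<dots> \<le> (\<Sum>j<m. b * (cmod (v \<bullet>c vs j))\<^sup>2)"
  proof (rule sum_mono)
    fix j assume "j \<in> {..<m}"
    thus "ds j * (cmod (v \<bullet>c vs j))\<^sup>2 \<le> b * (cmod (v \<bullet>c vs j))\<^sup>2"
      using vL unfolding L_def by (cases "b < ds j") (auto intro: mult_right_mono)
  qed
  also have "\<dots> = b * sqnorm v"
    using orthonormal_eigenbasis_sqnorm[OF basis vS] by (simp add: sum_distrib_left)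
  finally show ?thesis .
qed

text \<open>The lower bound puts every eigenvector with eigenvalue at most \<open>b\<close> into the eigenspan, so \<open>y\<close> only
  has components along eigenvalues above \<open>b\<close>.\<close>

lemma quadratic_form_gt_off_eigenspan:
  assumes S: "is_subspace n S" and g: "hermitian_on n S g"
    and lower: "\<forall>y\<in>S. a * sqnorm y \<le> Re (y \<bullet>c g y)"
    and y: "y \<in> S" "y \<noteq> 0\<^sub>v n" and orth: "\<forall>u\<in>eigenspan n S g a b. y \<bullet>c u = 0"
  shows "b * sqnorm y < Re (y \<bullet>c g y)"
proof -
  obtain vs ds m where basis: "orthonormal_eigenbasis n S g vs ds m"
    using hermitian_on_eigenbasis[OF S g] by blast
  have eig: "\<forall>j<m. vs j \<in> S \<and> g (vs j) = complex_of_real (ds j) \<cdot>\<^sub>v vs j"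
    using basis unfolding orthonormal_eigenbasis_def by auto
  define x where "x = (\<lambda>j. (cmod (y \<bullet>c vs j))\<^sup>2)"
  have ds_ge: "a \<le> ds j" if "j < m" for j
    using orthonormal_eigenbasis_eigenvalue_ge[OF basis lower that] .
  have x_low: "x j = 0" if j: "j < m" and "ds j \<le> b" for j
  proof -
    have "vs j \<in> S \<and> a \<le> ds j \<and> ds j \<le> b \<and> g (vs j) = complex_of_real (ds j) \<cdot>\<^sub>v vs j"
      using eig j ds_ge[OF j] \<open>ds j \<le> b\<close> by simp
    hence "vs j \<in> {y \<in> S. \<exists>e::real. a \<le> e \<and> e \<le> b \<and> g y = complex_of_real e \<cdot>\<^sub>v y}" by blast
    hence "vs j \<in> eigenspan n S g a b" unfolding eigenspan_def by (rule subsetD[OF vspan_superset])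
    hence "y \<bullet>c vs j = 0" using orth by blast
    thus ?thesis unfolding x_def by simp
  qed
  have "0 < sqnorm y"
    using sqnorm_nonneg[OF subspace_carrier[OF S y(1)]] sqnorm_eq_0_iff[OF subspace_carrier[OF S y(1)]] y(2)
    by linarith
  hence "(\<Sum>j<m. x j) \<noteq> 0" using orthonormal_eigenbasis_sqnorm[OF basis y(1)] unfolding x_def by simp
  then obtain k where k: "k < m" "x k \<noteq> 0" using sum.neutral[of "{..<m}" x] by blast
  have "b * sqnorm y = (\<Sum>j<m. b * x j)"
    using orthonormal_eigenbasis_sqnorm[OF basis y(1)] unfolding x_def by (simp add: sum_distrib_left)
  also have "\<dots> < (\<Sum>j<m. ds j * x j)"
  proof (rule sum_strict_mono_ex1)
    show "\<forall>j\<in>{..<m}. b * x j \<le> ds j * x j"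
    proof
      fix j assume "j \<in> {..<m}"
      thus "b * x j \<le> ds j * x j"
        using x_low[of j] unfolding x_def by (cases "ds j \<le> b") (auto intro: mult_right_mono)
    qed
    have "b < ds k" using k x_low[of k] by force
    thus "\<exists>j\<in>{..<m}. b * x j < ds j * x j"
      using k unfolding x_def by (intro bexI[of _ k]) (auto intro: mult_strict_right_mono)
  qed simp
  also have "\<dots> = Re (y \<bullet>c g y)"
    using orthonormal_eigenbasis_quadratic_form[OF S g basis y(1)] unfolding x_def by simp
  finally show ?thesis .
qed

section \<open>Adjoints and compressions of matrices\<close>

lemma mat_adjoint_carrier: "A \<in> carrier_mat n n \<Longrightarrow> mat_adjoint A \<in> carrier_mat n n"
  unfolding mat_adjoint_def by (auto simp: mat_of_rows_def)

lemma mat_adjoint_index: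
  "A \<in> carrier_mat n n \<Longrightarrow> i < n \<Longrightarrow> j < n \<Longrightarrow> mat_adjoint A $$ (i,j) = cnj (A $$ (j,i))"
  unfolding mat_adjoint_def by (auto simp: mat_of_rows_def)

lemma cscalar_prod_mat_adjoint:
  assumes A: "(A::complex mat) \<in> carrier_mat n n" and v: "v \<in> carrier_vec n" and w: "w \<in> carrier_vec n"
  shows "(A *\<^sub>v v) \<bullet>c w = v \<bullet>c (mat_adjoint A *\<^sub>v w)"
proof -
  have Ah: "mat_adjoint A \<in> carrier_mat n n" using mat_adjoint_carrier[OF A] .
  have "(A *\<^sub>v v) \<bullet>c w = (\<Sum>i<n. (A *\<^sub>v v) $ i * cnj (w $ i))"
    using A v w by (intro cscalar_prod_eq_sum) auto
  also have "\<dots> = (\<Sum>i<n. (\<Sum>j<n. A $$ (i,j) * v $ j) * cnj (w $ i))"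
    using A v by (intro sum.cong) (auto simp: scalar_prod_def lessThan_atLeast0)
  also have "\<dots> = (\<Sum>i<n. \<Sum>j<n. A $$ (i,j) * v $ j * cnj (w $ i))"
    by (simp add: sum_distrib_right)
  also have "\<dots> = (\<Sum>j<n. \<Sum>i<n. A $$ (i,j) * v $ j * cnj (w $ i))"
    by (rule sum.swap)
  also have "\<dots> = (\<Sum>j<n. v $ j * cnj (\<Sum>i<n. mat_adjoint A $$ (j,i) * w $ i))"
    by (intro sum.cong refl) (auto simp: mat_adjoint_index[OF A] sum_distrib_left ac_simps intro!: sum.cong)
  also have "\<dots> = (\<Sum>j<n. v $ j * cnj ((mat_adjoint A *\<^sub>v w) $ j))"
    using Ah w by (intro sum.cong) (auto simp: scalar_prod_def lessThan_atLeast0)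
  also have "\<dots> = v \<bullet>c (mat_adjoint A *\<^sub>v w)" using Ah v w by (intro cscalar_prod_eq_sum[symmetric]) auto
  finally show ?thesis .
qed

text \<open>The compression \<open>y \<mapsto> P\<^sub>Y (X y)\<close> is the two-sided restriction \<open>X|\<^sub>Y\<close>.\<close>

lemma cscalar_prod_compression:
  fixes X :: "complex mat"
  assumes Y: "is_subspace n Y" and X: "X \<in> carrier_mat n n" and y: "y \<in> Y"
  shows "y \<bullet>c proj Y (X *\<^sub>v y) = y \<bullet>c (X *\<^sub>v y)"
proof -
  have yc: "y \<in> carrier_vec n" using subspace_carrier[OF Y y] .
  have Xyc: "X *\<^sub>v y \<in> carrier_vec n" using X yc by simp
  have "y \<bullet>c proj Y (X *\<^sub>v y) = cnj (proj Y (X *\<^sub>v y) \<bullet>c y)"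
    using cnj_cscalar_prod[OF proj_carrier[OF Y Xyc] yc] by simp
  also have "\<dots> = y \<bullet>c (X *\<^sub>v y)"
    using cscalar_prod_proj_left[OF Y Xyc y] cnj_cscalar_prod[OF Xyc yc] by simp
  finally show ?thesis .
qed

lemma hermitian_on_compression:
  fixes X :: "complex mat"
  assumes Y: "is_subspace n Y" and X: "X \<in> carrier_mat n n"
    and self_adjoint: "\<And>v w. v \<in> carrier_vec n \<Longrightarrow> w \<in> carrier_vec n \<Longrightarrow> (X *\<^sub>v v) \<bullet>c w = v \<bullet>c (X *\<^sub>v w)"
  shows "hermitian_on n Y (\<lambda>y. proj Y (X *\<^sub>v y))"
  unfolding hermitian_on_def
proof (intro conjI ballI allI)
  fix s assume s: "s \<in> Y"
  have sc: "s \<in> carrier_vec n" using subspace_carrier[OF Y s] .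
  have Xsc: "X *\<^sub>v s \<in> carrier_vec n" using X sc by simp
  show "proj Y (X *\<^sub>v s) \<in> Y" using proj_in[OF Y Xsc] .
  fix c show "proj Y (X *\<^sub>v (c \<cdot>\<^sub>v s)) = c \<cdot>\<^sub>v proj Y (X *\<^sub>v s)"
    using proj_smult[OF Y Xsc] mult_mat_vec[OF X sc] by simp
next
  fix s t assume s: "s \<in> Y" and t: "t \<in> Y"
  have sc: "s \<in> carrier_vec n" and tc: "t \<in> carrier_vec n" using subspace_carrier[OF Y] s t by auto
  have Xsc: "X *\<^sub>v s \<in> carrier_vec n" and Xtc: "X *\<^sub>v t \<in> carrier_vec n" using X sc tc by auto
  show "proj Y (X *\<^sub>v (s + t)) = proj Y (X *\<^sub>v s) + proj Y (X *\<^sub>v t)"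
    using proj_add[OF Y Xsc Xtc] mult_add_distrib_mat_vec[OF X sc tc] by simp
  have "proj Y (X *\<^sub>v s) \<bullet>c t = s \<bullet>c (X *\<^sub>v t)"
    using cscalar_prod_proj_left[OF Y Xsc t] self_adjoint[OF sc tc] by simp
  also have "\<dots> = cnj ((X *\<^sub>v t) \<bullet>c s)" using cnj_cscalar_prod[OF Xtc sc] by simp
  also have "\<dots> = cnj (proj Y (X *\<^sub>v t) \<bullet>c s)" using cscalar_prod_proj_left[OF Y Xtc s] by simp
  also have "\<dots> = s \<bullet>c proj Y (X *\<^sub>v t)" using cnj_cscalar_prod[OF proj_carrier[OF Y Xtc] sc] .
  finally show "proj Y (X *\<^sub>v s) \<bullet>c t = s \<bullet>c proj Y (X *\<^sub>v t)" .
qed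

lemma quadratic_form_kernel_shift:
  fixes X :: "complex mat"
  assumes X: "X \<in> carrier_mat n n"
    and self_adjoint: "\<And>v w. v \<in> carrier_vec n \<Longrightarrow> w \<in> carrier_vec n \<Longrightarrow> (X *\<^sub>v v) \<bullet>c w = v \<bullet>c (X *\<^sub>v w)"
    and z: "z \<in> carrier_vec n" "X *\<^sub>v z = 0\<^sub>v n" and y: "y \<in> carrier_vec n"
  shows "(z - y) \<bullet>c (X *\<^sub>v (z - y)) = y \<bullet>c (X *\<^sub>v y)"
proof -
  have wc: "z - y \<in> carrier_vec n" and Xyc: "X *\<^sub>v y \<in> carrier_vec n" using z y X by auto
  have "X *\<^sub>v (z - y) = (-1) \<cdot>\<^sub>v (X *\<^sub>v y)"
    using mult_minus_distrib_mat_vec[OF X z(1) y] z(2) Xyc by (auto intro!: eq_vecI)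
  moreover have "z \<bullet>c (X *\<^sub>v (z - y)) = 0"
    using self_adjoint[OF z(1) wc] z(2) cscalar_prod_zero_left[OF wc] by simp
  ultimately show ?thesis
    using cscalar_prod_diff_left[OF z(1) y, of "X *\<^sub>v (z - y)"] cscalar_prod_smult_right[OF y Xyc] Xyc
    by simp
qed

section \<open>The Hamiltonian of an AGSP\<close>

locale agsp =
  fixes n :: nat and Z :: "complex vec set" and \<Delta> :: real and A :: "complex mat"
  assumes Z: "is_subspace n Z" and AGSP: "AGSP n \<Delta> Z A"
begin

abbreviation H :: "complex mat" where "H \<equiv> 1\<^sub>m n - mat_adjoint A * A"

lemma A_carrier: "A \<in> carrier_mat n n"
  and A_fixes: "z \<in> Z \<Longrightarrow> A *\<^sub>v z = z"
  and A_perp: "w \<in> orth_compl n Z \<Longrightarrow> A *\<^sub>v w \<in> orth_compl n Z"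
  and A_perp_norm: "w \<in> orth_compl n Z \<Longrightarrow> vnorm (A *\<^sub>v w) \<le> sqrt \<Delta> * vnorm w"
  using AGSP unfolding AGSP_def by blast+

lemma H_carrier: "H \<in> carrier_mat n n"
  using mat_adjoint_carrier[OF A_carrier] A_carrier by auto

lemma H_apply:
  assumes v: "v \<in> carrier_vec n"
  shows "H *\<^sub>v v = v - mat_adjoint A *\<^sub>v (A *\<^sub>v v)"
proof -
  have Ah: "mat_adjoint A \<in> carrier_mat n n" using mat_adjoint_carrier[OF A_carrier] .
  have "H *\<^sub>v v = 1\<^sub>m n *\<^sub>v v - (mat_adjoint A * A) *\<^sub>v v"
    using A_carrier Ah v by (intro minus_mult_distrib_mat_vec) auto
  thus ?thesis using A_carrier Ah v by (simp add: assoc_mult_mat_vec)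
qed

lemma cscalar_prod_H_right:
  assumes v: "v \<in> carrier_vec n" and w: "w \<in> carrier_vec n"
  shows "w \<bullet>c (H *\<^sub>v v) = w \<bullet>c v - (A *\<^sub>v w) \<bullet>c (A *\<^sub>v v)"
proof -
  have Av: "A *\<^sub>v v \<in> carrier_vec n" using A_carrier v by simp
  have "w \<bullet>c (mat_adjoint A *\<^sub>v (A *\<^sub>v v)) = (A *\<^sub>v w) \<bullet>c (A *\<^sub>v v)"
    using cscalar_prod_mat_adjoint[OF A_carrier w Av] by simp
  thus ?thesis
    using H_apply[OF v] cscalar_prod_diff_right[OF v _ w] mat_adjoint_carrier[OF A_carrier] Av by simp
qed

lemma H_self_adjoint:
  assumes v: "v \<in> carrier_vec n" and w: "w \<in> carrier_vec n"
  shows "(H *\<^sub>v v) \<bullet>c w = v \<bullet>c (H *\<^sub>v w)"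
proof -
  have "(H *\<^sub>v v) \<bullet>c w = cnj (w \<bullet>c (H *\<^sub>v v))" using cnj_cscalar_prod[OF w] H_carrier v by simp
  thus ?thesis
    using cscalar_prod_H_right[OF v w] cscalar_prod_H_right[OF w v] cnj_cscalar_prod[OF w v]
      cnj_cscalar_prod[of "A *\<^sub>v w" n "A *\<^sub>v v"] A_carrier v w by simp
qed

lemma perp_part: "v \<in> carrier_vec n \<Longrightarrow> v - proj Z v \<in> orth_compl n Z"
  unfolding orth_compl_def using proj_orthogonal[OF Z] proj_carrier[OF Z] by auto

lemma A_decompose:
  assumes v: "v \<in> carrier_vec n"
  shows "A *\<^sub>v v = proj Z v + A *\<^sub>v (v - proj Z v)"
proof -
  have pc: "proj Z v \<in> carrier_vec n" using proj_carrier[OF Z v] .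
  have "A *\<^sub>v v = A *\<^sub>v (proj Z v + (v - proj Z v))" using pc v by (metis vec_diff_add_cancel add_carrier_vec comm_add_vec minus_carrier_vec)
  also have "\<dots> = A *\<^sub>v proj Z v + A *\<^sub>v (v - proj Z v)"
    using A_carrier pc v by (intro mult_add_distrib_mat_vec) auto
  finally show ?thesis using A_fixes[OF proj_in[OF Z v]] by simp
qed

text \<open>\<open>A\<close> preserves \<open>Z\<^sup>\<perp>\<close>, so \<open>A\<^sup>\<dagger>\<close> preserves \<open>Z\<close>, where it is the identity.\<close>

lemma adjoint_fixes:
  assumes z: "z \<in> Z"
  shows "mat_adjoint A *\<^sub>v z = z"
proof -
  have zc: "z \<in> carrier_vec n" using subspace_carrier[OF Z z] .
  have Ah: "mat_adjoint A \<in> carrier_mat n n" using mat_adjoint_carrier[OF A_carrier] .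
  define d where "d = mat_adjoint A *\<^sub>v z - z"
  have dc: "d \<in> carrier_vec n" unfolding d_def using Ah zc by simp
  have "w \<bullet>c d = 0" if w: "w \<in> carrier_vec n" for w
  proof -
    have pc: "proj Z w \<in> carrier_vec n" using proj_carrier[OF Z w] .
    have Aqc: "A *\<^sub>v (w - proj Z w) \<in> carrier_vec n" using A_carrier w pc by simp
    have "w \<bullet>c (mat_adjoint A *\<^sub>v z) = (A *\<^sub>v w) \<bullet>c z"
      using cscalar_prod_mat_adjoint[OF A_carrier w zc] by simp
    also have "\<dots> = proj Z w \<bullet>c z + (A *\<^sub>v (w - proj Z w)) \<bullet>c z"
      unfolding A_decompose[OF w] using cscalar_prod_add_left[OF pc Aqc zc] .
    also have "\<dots> = w \<bullet>c z"
      using A_perp[OF perp_part[OF w]] z cscalar_prod_proj_left[OF Z w z]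
      unfolding orth_compl_def by simp
    finally show ?thesis
      unfolding d_def using cscalar_prod_diff_right[of "mat_adjoint A *\<^sub>v z" n z w] Ah zc w by simp
  qed
  hence "d = 0\<^sub>v n" using dc cscalar_prod_self_eq_0_iff[OF dc] by blast
  thus ?thesis unfolding d_def using Ah zc by (metis vec_diff_add_cancel left_zero_vec mult_mat_vec_carrier)
qed

lemma H_kernel: "z \<in> Z \<Longrightarrow> H *\<^sub>v z = 0\<^sub>v n"
  using H_apply[OF subspace_carrier[OF Z]] A_fixes adjoint_fixes subspace_carrier[OF Z]
  by (auto intro!: eq_vecI)

text \<open>The quadratic form of \<open>H\<close> only sees the component \<open>q\<close> of \<open>v\<close> in \<open>Z\<^sup>\<perp>\<close>, because \<open>A\<close> fixes \<open>Z\<close>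
  and maps \<open>q\<close> into \<open>Z\<^sup>\<perp>\<close>.\<close>

lemma quadratic_form_H:
  assumes v: "v \<in> carrier_vec n"
  shows "Re (v \<bullet>c (H *\<^sub>v v)) = sqnorm (v - proj Z v) - sqnorm (A *\<^sub>v (v - proj Z v))"
proof -
  define p q where "p = proj Z v" and "q = v - proj Z v"
  have pZ: "p \<in> Z" and pc: "p \<in> carrier_vec n" unfolding p_def using proj_in[OF Z v] proj_carrier[OF Z v] .
  have Aq: "A *\<^sub>v q \<in> orth_compl n Z" unfolding q_def using A_perp[OF perp_part[OF v]] .
  hence Aqc: "A *\<^sub>v q \<in> carrier_vec n" and "(A *\<^sub>v q) \<bullet>c p = 0" using pZ unfolding orth_compl_def by auto
  hence "p \<bullet>c (A *\<^sub>v q) = 0" using cnj_cscalar_prod[OF Aqc pc] by (metis complex_cnj_zero)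
  hence "sqnorm (A *\<^sub>v v) = sqnorm p + sqnorm (A *\<^sub>v q)"
    using A_decompose[OF v] sqnorm_add_orthogonal[OF pc Aqc] unfolding p_def q_def by simp
  moreover have "sqnorm v = sqnorm p + sqnorm q"
    unfolding p_def q_def using sqnorm_proj_pythagoras[OF Z v] .
  moreover have "Re (v \<bullet>c (H *\<^sub>v v)) = sqnorm v - sqnorm (A *\<^sub>v v)"
    using cscalar_prod_H_right[OF v v] unfolding sqnorm_def by simp
  ultimately show ?thesis unfolding q_def by simp
qed

lemma quadratic_form_H_le: "v \<in> carrier_vec n \<Longrightarrow> Re (v \<bullet>c (H *\<^sub>v v)) \<le> sqnorm (v - proj Z v)"
  using quadratic_form_H sqnorm_nonneg[of "A *\<^sub>v (v - proj Z v)" n] A_carrier proj_carrier[OF Z]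
  by fastforce

lemma sqnorm_A_perp_le:
  assumes "\<Delta> \<le> 1/2" and w: "w \<in> orth_compl n Z"
  shows "sqnorm (A *\<^sub>v w) \<le> sqnorm w / 2"
proof -
  have wc: "w \<in> carrier_vec n" using w unfolding orth_compl_def by blast
  have Awc: "A *\<^sub>v w \<in> carrier_vec n" using A_carrier wc by simp
  have bound: "vnorm (A *\<^sub>v w) \<le> sqrt \<Delta> * vnorm w" using A_perp_norm[OF w] .
  have nonneg: "0 \<le> vnorm (A *\<^sub>v w)" "0 \<le> vnorm w" "0 \<le> sqnorm w"
    using sqnorm_nonneg Awc wc unfolding vnorm_def sqnorm_def by auto
  show ?thesis
  proof (cases "\<Delta> \<ge> 0")
    case True
    have "(vnorm (A *\<^sub>v w))\<^sup>2 \<le> (sqrt \<Delta> * vnorm w)\<^sup>2" using bound nonneg by (intro power_mono)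
    also have "\<dots> = \<Delta> * sqnorm w" using True vnorm_power2[OF wc] by (simp add: power_mult_distrib)
    also have "\<dots> \<le> sqnorm w / 2" using \<open>\<Delta> \<le> 1/2\<close> nonneg by (simp add: mult_right_mono[of \<Delta> "1/2" "sqnorm w", simplified])
    finally show ?thesis using vnorm_power2[OF Awc] by simp
  next
    case False
    hence "sqrt \<Delta> * vnorm w \<le> 0" using nonneg by (simp add: mult_nonpos_nonneg)
    hence "vnorm (A *\<^sub>v w) = 0" using bound nonneg by linarith
    hence "sqnorm (A *\<^sub>v w) = 0" using vnorm_power2[OF Awc] by simp
    thus ?thesis using nonneg by simp
  qed
qed

lemma sqnorm_perp_le_quadratic_form_H:
  "\<Delta> \<le> 1/2 \<Longrightarrow> v \<in> carrier_vec n \<Longrightarrow> sqnorm (v - proj Z v) \<le> 2 * Re (v \<bullet>c (H *\<^sub>v v))"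
  using quadratic_form_H sqnorm_A_perp_le perp_part by fastforce

section \<open>The spectral subspace of the compressed Hamiltonian\<close>

lemma hermitian_on_compression_H: "is_subspace n Y \<Longrightarrow> hermitian_on n Y (\<lambda>y. proj Y (H *\<^sub>v y))"
  using hermitian_on_compression[OF _ H_carrier H_self_adjoint] .

text \<open>As \<open>H z = 0\<close>, the energy of \<open>y = P\<^sub>Y z\<close> is that of \<open>z - y\<close>, which is at most the weight of \<open>y\<close>
  outside \<open>Z\<close>.\<close>

lemma quadratic_form_H_proj_le:
  assumes Y: "is_subspace n Y" and z: "z \<in> Z"
    and via: "(1 - \<delta>) * sqnorm z \<le> sqnorm (proj Y z)"
  shows "Re (proj Y z \<bullet>c (H *\<^sub>v proj Y z)) \<le> \<delta> * sqnorm (proj Y z)"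
proof -
  have zc: "z \<in> carrier_vec n" using subspace_carrier[OF Z z] .
  define y where "y = proj Y z"
  have yc: "y \<in> carrier_vec n" unfolding y_def using proj_carrier[OF Y zc] .
  have pyc: "proj Z y \<in> carrier_vec n" using proj_carrier[OF Z yc] .
  have "(z - y) - proj Z (z - y) = (-1) \<cdot>\<^sub>v (y - proj Z y)"
    using proj_diff[OF Z zc yc] proj_of_mem[OF Z z] zc yc pyc by (auto intro!: eq_vecI)
  hence "sqnorm ((z - y) - proj Z (z - y)) = sqnorm (y - proj Z y)"
    using sqnorm_smult[of "y - proj Z y" n "-1"] yc pyc by simp
  hence "Re (y \<bullet>c (H *\<^sub>v y)) \<le> sqnorm (y - proj Z y)"
    using quadratic_form_kernel_shift[OF H_carrier H_self_adjoint zc H_kernel[OF z] yc]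
      quadratic_form_H_le[of "z - y"] zc yc by simp
  also have "\<dots> = sqnorm y - sqnorm (proj Z y)" using sqnorm_proj_pythagoras[OF Z yc] by simp
  also have "\<dots> \<le> \<delta> * sqnorm y"
    using sqnorm_proj_proj_ge[OF Y Z z via] unfolding y_def by (simp add: algebra_simps)
  finally show ?thesis unfolding y_def .
qed

lemma sqnorm_proj_Z_ge_on_spectral_subspace:
  assumes "\<Delta> \<le> 1/2" and Y: "is_subspace n Y" and u: "u \<in> spectral_subspace n Y H 0 \<delta>"
  shows "(1 - 2 * \<delta>) * sqnorm u \<le> sqnorm (proj Z u)"
proof -
  have uY: "u \<in> Y"
    using u eigenspan_subspace(2)[OF Y] unfolding spectral_subspace_eq_eigenspan by blast
  have uc: "u \<in> carrier_vec n" using subspace_carrier[OF Y uY] .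
  have "Re (u \<bullet>c (H *\<^sub>v u)) \<le> \<delta> * sqnorm u"
    using quadratic_form_le_on_eigenspan[OF Y hermitian_on_compression_H[OF Y], of u 0 \<delta>] u
      cscalar_prod_compression[OF Y H_carrier uY] unfolding spectral_subspace_eq_eigenspan by simp
  thus ?thesis
    using sqnorm_perp_le_quadratic_form_H[OF \<open>\<Delta> \<le> 1/2\<close> uc] sqnorm_proj_pythagoras[OF Z uc]
    by (simp add: algebra_simps)
qed

text \<open>For \<open>z \<in> Z\<close> orthogonal to the spectral subspace, \<open>P\<^sub>Y z\<close> is orthogonal to it as well and has energy
  at most \<open>\<delta>\<close>, so it vanishes; viability then forces \<open>z = 0\<close>.\<close>

lemma orthogonal_to_spectral_subspace:
  assumes "\<Delta> \<le> 1/2" and "\<delta> < 1" and Y: "is_subspace n Y"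
    and via: "\<forall>z\<in>Z. (1 - \<delta>) * sqnorm z \<le> sqnorm (proj Y z)"
    and z: "z \<in> Z" and orth: "\<forall>u\<in>spectral_subspace n Y H 0 \<delta>. z \<bullet>c u = 0"
  shows "z = 0\<^sub>v n"
proof -
  have zc: "z \<in> carrier_vec n" using subspace_carrier[OF Z z] .
  let ?y = "proj Y z"
  have yY: "?y \<in> Y" and yc: "?y \<in> carrier_vec n" using proj_in[OF Y zc] proj_carrier[OF Y zc] .
  have energy: "Re (?y \<bullet>c proj Y (H *\<^sub>v ?y)) \<le> \<delta> * sqnorm ?y"
    using quadratic_form_H_proj_le[OF Y z] via z cscalar_prod_compression[OF Y H_carrier yY] by simp
  have nonneg: "\<forall>y\<in>Y. 0 * sqnorm y \<le> Re (y \<bullet>c proj Y (H *\<^sub>v y))"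
  proof
    fix y assume y: "y \<in> Y"
    hence yc: "y \<in> carrier_vec n" using subspace_carrier[OF Y] by blast
    have "0 \<le> sqnorm (y - proj Z y)" using sqnorm_nonneg[of _ n] yc proj_carrier[OF Z yc] by simp
    thus "0 * sqnorm y \<le> Re (y \<bullet>c proj Y (H *\<^sub>v y))"
      using sqnorm_perp_le_quadratic_form_H[OF \<open>\<Delta> \<le> 1/2\<close> yc] cscalar_prod_compression[OF Y H_carrier y]
      by simp
  qed
  have "\<forall>u\<in>spectral_subspace n Y H 0 \<delta>. ?y \<bullet>c u = 0"
    using orth cscalar_prod_proj_left[OF Y zc] eigenspan_subspace(2)[OF Y]
    unfolding spectral_subspace_eq_eigenspan by (metis subsetD)
  hence "?y = 0\<^sub>v n"
    using quadratic_form_gt_off_eigenspan[OF Y hermitian_on_compression_H[OF Y] nonneg yY] energy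
    unfolding spectral_subspace_eq_eigenspan by (meson not_less)
  hence "sqnorm ?y = 0" using sqnorm_eq_0_iff[OF yc] by simp
  hence "(1 - \<delta>) * sqnorm z \<le> 0" using via z by metis
  thus ?thesis
    using \<open>\<delta> < 1\<close> sqnorm_nonneg[OF zc] sqnorm_eq_0_iff[OF zc] by (simp add: mult_le_0_iff)
qed

lemma sqnorm_proj_spectral_subspace_ge:
  assumes "\<Delta> \<le> 1/2" and Y: "is_subspace n Y"
    and via: "\<forall>z\<in>Z. (1 - \<delta>) * sqnorm z \<le> sqnorm (proj Y z)" and z: "z \<in> Z"
  shows "(1 - 2 * \<delta>) * sqnorm z \<le> sqnorm (proj (spectral_subspace n Y H 0 \<delta>) z)"
proof -
  let ?Zt = "spectral_subspace n Y H 0 \<delta>"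
  have Zt: "is_subspace n ?Zt"
    unfolding spectral_subspace_eq_eigenspan using eigenspan_subspace(1)[OF Y] .
  show ?thesis
  proof (cases "\<delta> < 1")
    case True
    have "Z \<subseteq> proj Z ` ?Zt"
      using subset_proj_image[OF Zt Z] orthogonal_to_spectral_subspace[OF \<open>\<Delta> \<le> 1/2\<close> True Y via] by blast
    thus ?thesis
      using sqnorm_proj_ge_if_proj_image[OF Zt Z] sqnorm_proj_Z_ge_on_spectral_subspace[OF \<open>\<Delta> \<le> 1/2\<close> Y] z
      by blast
  next
    case False
    have "0 \<le> sqnorm z" "0 \<le> sqnorm (proj ?Zt z)"
      using sqnorm_nonneg subspace_carrier[OF Z z] proj_carrier[OF Zt] by blast+
    thus ?thesis using False by (smt (verit) mult_nonpos_nonneg)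
  qed
qed

end

theorem lemma3p4:
  fixes n :: nat and Z Y :: "complex vec set" and A :: "complex mat"
    and \<Delta> \<delta> :: real
  assumes "is_subspace n Z"
    and "AGSP n \<Delta> Z A"
    and "\<Delta> \<le> 1/2"
    and "\<delta> > 0"
    and "is_subspace n Y"
    and "viable \<delta> Y Z"
  shows "close (2 * \<delta>) (spectral_subspace n Y (1\<^sub>m n - mat_adjoint A * A) 0 \<delta>) Z"
proof -
  interpret agsp n Z \<Delta> A using assms(1,2) by unfold_locales
  let ?Zt = "spectral_subspace n Y H 0 \<delta>"
  have Zt: "is_subspace n ?Zt"
    unfolding spectral_subspace_eq_eigenspan using eigenspan_subspace(1)[OF assms(5)] .
  have via: "\<forall>z\<in>Z. (1 - \<delta>) * sqnorm z \<le> sqnorm (proj Y z)"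
    using assms(6) viable_iff_sqnorm[OF assms(5) Z] by blast
  show ?thesis
    unfolding close_def viable_iff_sqnorm[OF Zt Z] viable_iff_sqnorm[OF Z Zt]
    using sqnorm_proj_spectral_subspace_ge[OF assms(3,5) via]
      sqnorm_proj_Z_ge_on_spectral_subspace[OF assms(3,5)] by blast
qed

end
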